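(* Let $k\ge 0$ be an integer. Assume that $f$ satisfies conditions (A1), (A2), (A3) and (A4) below (all with this $k$), and let $\bar\lambda_k=\lambda+\frac{2\tau_k\mathsf D^k}{k!}\mathbb 1\{k\ge 1\}$. Let $x^*\in X$ be a $(\tfrac16\varepsilon,2\bar\lambda_k)$-FOSP of the surrogate problem $\min_{x\in X}\max_{y\in Y}\hat f_k(x,y)$, where $\hat y\in Y$ is an arbitrary expansion center. Then $x^*$ is an $(\varepsilon,2\bar\lambda_k)$-FOSP of the problem $\min_{x\in X}\max_{y\in Y}f(x,y)$, provided that $$\min\Big\{\mu\mathsf D,\;2\sigma_0,\;\sqrt{\tfrac{\lambda\rho_0\mathsf D}{50}}\Big\}\le\frac{\varepsilon}{24}\quad\text{when }k=0,$$ and $$\min\Big\{\mu\mathsf D+\frac{2\sigma_k\mathsf D^k}{k!},\;\sqrt{\frac{\bar\lambda_k\rho_k\mathsf D^{k+1}}{50\cdot(k+1)!}}\Big\}\le\frac{\varepsilon}{24}\quad\text{when }k\ge 1.$$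
   Context: Let $E_x,E_y$ be finite-dimensional Euclidean spaces with Euclidean norms $\|\cdot\|$; for tensors (multilinear forms) of partial derivatives, $\|\cdot\|$ denotes the operator norm induced by the Euclidean norms. Let $X\subseteq E_x$ and $Y\subseteq E_y$ be convex sets with nonempty interior, with $Y$ compact, and let $\mathsf D\ge\mathrm{diam}(Y)=\max_{y,y'\in Y}\|y-y'\|$. Let $f:X\times Y\to\mathbb R$. Write $\nabla^k_{y\cdots y}f$ for the tensor of $k$-th order partial derivatives in $y$, and $\nabla^{k+1}_{xy\cdots y}f$, $\nabla^{k+2}_{xxy\cdots y}f$ for the tensors with additionally one, respectively two, partial derivatives in $x$. (A1) $\nabla_x f$ exists on $X\times Y$ and $\|\nabla_x f(x',y')-\nabla_x f(x,y)\|\le\lambda\|x'-x\|+\mu\|y'-y\|$ for all $x,x'\in X$, $y,y'\in Y$, with $\lambda>0,\mu\ge0$. (A2) $\nabla^k_{y\cdots y}f$ exists on $X\times Y$ and $\|\nabla^k_{y\cdots y}f(x',y')-\nabla^k_{y\cdots y}f(x,y)\|\le\rho_k\|y'-y\|+\sigma_k\|x'-x\|$ for all $x,x',y,y'$, with $\rho_k,\sigma_k\ge0$. (A3) $\nabla^{k+1}_{xy\cdots y}f$ exists on $X\times Y$ and $\|\nabla^{k+1}_{xy\cdots y}f(x',y)-\nabla^{k+1}_{xy\cdots y}f(x,y)\|\le\tau_k\|x'-x\|$ for all $x,x'\in X$, $y\in Y$, with $\tau_k\ge0$. (A4) Letting $Y'_x\subseteq Y$ be the set of $y$ at which $\nabla^{k+2}_{xxy\cdots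 y}f(x,y)$ does not exist, the set $\{(x,y):x\in X,\,y\in Y'_x\}$ is Lebesgue measurable. For fixed $\hat y\in Y$, the $k$-th order Taylor approximation is $\hat f_k(x,y)=\sum_{j=0}^k\frac1{j!}\nabla^j_{y\cdots y}f(x,\hat y)[(y-\hat y)^j]$, where $T[v^j]=T[v,\dots,v]$. A function $\phi:X\to\mathbb R$ is $\lambda$-weakly convex if $\phi+\frac\lambda2\|\cdot\|^2$ is convex; for such $\phi$ and $\lambda'>\lambda$ its Moreau envelope is $\phi_{\lambda'}(x)=\min_{u\in X}\{\phi(u)+\frac{\lambda'}{2}\|u-x\|^2\}$ (a differentiable function). For a min-max problem $\min_{x\in X}\max_{y\in Y}g(x,y)$ with primal function $\psi(x)=\max_{y\in Y}g(x,y)$, a point $x\in X$ is an $(\varepsilon,\lambda')$-first-order stationary point ($(\varepsilon,\lambda')$-FOSP) if $\|\nabla\psi_{\lambda'}(x)\|\le\varepsilon$. *)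

theory Defs
  imports "HOL-Analysis.Analysis"
begin

text \<open>Tensors (multilinear forms) in the y-variable are represented as functions on lists
of vectors; a k-linear form is evaluated on lists of length k.\<close>

definition tnorm :: "nat \<Rightarrow> ('b::real_normed_vector list \<Rightarrow> 'c::real_normed_vector) \<Rightarrow> real" where
  "tnorm k T = (SUP vs \<in> {vs. length vs = k \<and> (\<forall>v\<in>set vs. norm v \<le> 1)}. norm (T vs))"

definition y_derivs ::
  "'a set \<Rightarrow> 'b::real_normed_vector set \<Rightarrow> ('a \<Rightarrow> 'b \<Rightarrow> real) \<Rightarrow> nat
     \<Rightarrow> (nat \<Rightarrow> 'a \<Rightarrow> 'b \<Rightarrow> 'b list \<Rightarrow> real) \<Rightarrow> bool" where
  "y_derivs X Y f k D \<longleftrightarrow>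
     (\<forall>x\<in>X. \<forall>y\<in>Y. D 0 x y [] = f x y) \<and>
     (\<forall>j<k. \<forall>x\<in>X. \<forall>y\<in>Y. \<forall>vs. length vs = j \<longrightarrow>
        ((\<lambda>y'. D j x y' vs) has_derivative (\<lambda>v. D (Suc j) x y (v # vs))) (at y within Y))"

definition x_grad ::
  "'a::real_inner set \<Rightarrow> 'b set \<Rightarrow> ('a \<Rightarrow> 'b \<Rightarrow> real) \<Rightarrow> ('a \<Rightarrow> 'b \<Rightarrow> 'a) \<Rightarrow> bool" where
  "x_grad X Y g G \<longleftrightarrow>
     (\<forall>x\<in>X. \<forall>y\<in>Y. ((\<lambda>x'. g x' y) has_derivative (\<lambda>u. G x y \<bullet> u)) (at x within X))"

definition xy_deriv ::
  "'a::real_inner set \<Rightarrow> 'b set \<Rightarrow> nat \<Rightarrow> ('a \<Rightarrow> 'b \<Rightarrow> 'b list \<Rightarrow> real)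
     \<Rightarrow> ('a \<Rightarrow> 'b \<Rightarrow> 'b list \<Rightarrow> 'a) \<Rightarrow> bool" where
  "xy_deriv X Y k Dk Dx \<longleftrightarrow>
     (\<forall>x\<in>X. \<forall>y\<in>Y. \<forall>vs. length vs = k \<longrightarrow>
        ((\<lambda>x'. Dk x' y vs) has_derivative (\<lambda>u. Dx x y vs \<bullet> u)) (at x within X))"

definition xxy_exists ::
  "'a::real_normed_vector set \<Rightarrow> nat \<Rightarrow> ('a \<Rightarrow> 'b \<Rightarrow> 'b list \<Rightarrow> 'a) \<Rightarrow> 'a \<Rightarrow> 'b \<Rightarrow> bool" where
  "xxy_exists X k Dx x y \<longleftrightarrow>
     (\<forall>vs. length vs = k \<longrightarrow> (\<lambda>x'. Dx x' y vs) differentiable (at x within X))"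

definition taylor_approx ::
  "(nat \<Rightarrow> 'a \<Rightarrow> 'b::real_normed_vector \<Rightarrow> 'b list \<Rightarrow> real) \<Rightarrow> nat \<Rightarrow> 'b \<Rightarrow> 'a \<Rightarrow> 'b \<Rightarrow> real" where
  "taylor_approx D k yhat x y = (\<Sum>j\<le>k. D j x yhat (replicate j (y - yhat)) / fact j)"

definition primal :: "'b set \<Rightarrow> ('a \<Rightarrow> 'b \<Rightarrow> real) \<Rightarrow> 'a \<Rightarrow> real" where
  "primal Y g x = (SUP y\<in>Y. g x y)"

definition moreau :: "'a::real_normed_vector set \<Rightarrow> ('a \<Rightarrow> real) \<Rightarrow> real \<Rightarrow> 'a \<Rightarrow> real" where
  "moreau X \<phi> l x = (INF u\<in>X. \<phi> u + l / 2 * (norm (u - x))\<^sup>2)"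

definition is_fosp ::
  "'a::real_inner set \<Rightarrow> 'b set \<Rightarrow> ('a \<Rightarrow> 'b \<Rightarrow> real) \<Rightarrow> real \<Rightarrow> real \<Rightarrow> 'a \<Rightarrow> bool" where
  "is_fosp X Y g eps l x \<longleftrightarrow> x \<in> X \<and>
     (\<exists>G. (moreau X (primal Y g) l has_derivative (\<lambda>h. G \<bullet> h)) (at x) \<and> norm G \<le> eps)"

end

theory Submission
  imports Defs
begin

(* For a weakly convex function psi and l above its modulus, the Moreau envelope psi_l is
   differentiable at x with gradient l (x - p), where p is the proximal point of x, and
   psi + l/2 |. - x|^2 grows quadratically around p.  The primal functions of f and of its Taylor
   surrogate are weakly convex, with moduli lambda and lambda-bar: for f by (A1), for the surrogate
   because (A3) bounds the curvature in x of its coefficients.  Comparing the proximal points p and q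
   of the two primal functions at x* through this quadratic growth gives
   lambda-bar |p - q|^2 <= L |p - q| when the difference of the primal functions is L-Lipschitz
   (by (A1) and (A2)), and lambda-bar |p - q|^2 <= 2 delta when it is bounded by the Taylor
   remainder delta = rho D^(k+1) / (k+1)!.  Either way the two envelope gradients
   2 lambda-bar (x* - p) and 2 lambda-bar (x* - q) differ by at most 5/6 eps, while the second
   has norm at most eps/6. *)

section \<open>Taylor expansion with remainder bounds\<close>

lemma nonneg_if_has_derivative_nonneg:
  fixes g g' :: "real \<Rightarrow> real"
  assumes g': "\<And>t. t \<in> {0..1} \<Longrightarrow> (g has_real_derivative g' t) (at t within {0..1})"
    and nonneg: "\<And>t. t \<in> {0..1} \<Longrightarrow> 0 \<le> g' t" and "g 0 = 0" and t: "t \<in> {0..1}"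
  shows "0 \<le> g t"
proof -
  have "\<exists>s\<in>{0..t}. g t - g 0 = g' s * (t - 0)"
  proof (rule mvt_very_simple)
    fix s assume "0 \<le> s" "s \<le> t"
    then have "(g has_real_derivative g' s) (at s within {0..1})" using g' t by auto
    then have "(g has_real_derivative g' s) (at s within {0..t})"
      by (rule has_field_derivative_subset) (use t in auto)
    then show "(g has_derivative (\<lambda>d. g' s * d)) (at s within {0..t})"
      by (simp add: has_field_derivative_def mult_commute_abs)
  qed (use t in auto)
  then show ?thesis using nonneg t \<open>g 0 = 0\<close> by (force intro: mult_nonneg_nonneg)
qed

lemma abs_le_if_has_derivative_abs_le:
  fixes \<phi> \<psi> \<phi>' \<psi>' :: "real \<Rightarrow> real"
  assumes \<phi>': "\<And>t. t \<in> {0..1} \<Longrightarrow> (\<phi> has_real_derivative \<phi>' t) (at t within {0..1})"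
    and \<psi>': "\<And>t. t \<in> {0..1} \<Longrightarrow> (\<psi> has_real_derivative \<psi>' t) (at t within {0..1})"
    and le: "\<And>t. t \<in> {0..1} \<Longrightarrow> \<bar>\<phi>' t\<bar> \<le> \<psi>' t" and "\<phi> 0 = 0" "\<psi> 0 = 0" and t: "t \<in> {0..1}"
  shows "\<bar>\<phi> t\<bar> \<le> \<psi> t"
proof -
  have "0 \<le> \<psi> t + s * \<phi> t" if "\<bar>s\<bar> = 1" for s
  proof (rule nonneg_if_has_derivative_nonneg[OF _ _ _ t])
    fix t :: real assume "t \<in> {0..1}"
    then show "((\<lambda>t. \<psi> t + s * \<phi> t) has_real_derivative \<psi>' t + s * \<phi>' t) (at t within {0..1})"
      using \<phi>' \<psi>' by (auto intro!: derivative_eq_intros)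
    have "\<bar>s * \<phi>' t\<bar> \<le> \<psi>' t" using le[OF \<open>t \<in> {0..1}\<close>] that by (simp add: abs_mult)
    then show "0 \<le> \<psi>' t + s * \<phi>' t" by linarith
  qed (use assms in simp)
  from this[of 1] this[of "-1"] show ?thesis by linarith
qed

lemma has_real_derivative_power_div_fact:
  "((\<lambda>t. t ^ Suc j / fact (Suc j)) has_real_derivative t ^ j / fact j) (at t within S)"
proof -
  have "((\<lambda>t. t ^ Suc j / fact (Suc j)) has_real_derivative of_nat (Suc j) * t ^ j / fact (Suc j))
      (at t within S)"
    using DERIV_pow[of "Suc j"] by (intro DERIV_cdivide) simp
  then show ?thesis by (simp del: of_nat_Suc)
qed

lemma has_real_derivative_taylor_polynomial:
  "((\<lambda>t. \<Sum>j\<le>Suc k. c j * t ^ j / fact j) has_real_derivative (\<Sum>j\<le>k. c (Suc j) * t ^ j / fact j))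
     (at t within S)"
proof -
  have "((\<lambda>t. c 0 + (\<Sum>j\<le>k. c (Suc j) * (t ^ Suc j / fact (Suc j)))) has_real_derivative
      0 + (\<Sum>j\<le>k. c (Suc j) * (t ^ j / fact j))) (at t within S)"
    by (intro DERIV_add DERIV_const DERIV_sum DERIV_cmult has_real_derivative_power_div_fact)
  then show ?thesis by (simp add: sum.atMost_Suc_shift del: sum.atMost_Suc)
qed

text \<open>The induction integrates the modulus of the last derivative once per order; this gives the
  constant \<open>C / (k + 1)!\<close> of the integral form of the remainder, which the mean-value form
  \<open>Taylor\<close> of the library does not.\<close>

lemma taylor_remainder_bound_real:
  fixes g :: "nat \<Rightarrow> real \<Rightarrow> real"
  assumes "\<And>j t. j < k \<Longrightarrow> t \<in> {0..1} \<Longrightarrow> (g j has_real_derivative g (Suc j) t) (at t within {0..1})"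
    and "\<And>t. t \<in> {0..1} \<Longrightarrow> \<bar>g k t - g k 0\<bar> \<le> B + C * t"
    and "t \<in> {0..1}"
  shows "\<bar>g 0 t - (\<Sum>j\<le>k. g j 0 * t ^ j / fact j)\<bar> \<le> B * t ^ k / fact k + C * t ^ Suc k / fact (Suc k)"
  using assms
proof (induction k arbitrary: g t)
  case 0
  then show ?case by simp
next
  case (Suc k)
  let ?\<phi> = "\<lambda>t. g 0 t - (\<Sum>j\<le>Suc k. g j 0 * t ^ j / fact j)"
  let ?\<psi> = "\<lambda>t. B * (t ^ Suc k / fact (Suc k)) + C * (t ^ Suc (Suc k) / fact (Suc (Suc k)))"
  let ?\<psi>' = "\<lambda>t. B * (t ^ k / fact k) + C * (t ^ Suc k / fact (Suc k))"
  have "\<bar>?\<phi> t\<bar> \<le> ?\<psi> t"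
  proof (rule abs_le_if_has_derivative_abs_le[where \<phi> = ?\<phi> and \<psi> = ?\<psi> and \<psi>' = ?\<psi>'])
    fix t :: real assume t: "t \<in> {0..1}"
    show "(?\<phi> has_real_derivative
        g 1 t - (\<Sum>j\<le>k. g (Suc j) 0 * t ^ j / fact j)) (at t within {0..1})"
      using Suc.prems(1)[of 0 t] t by (intro DERIV_diff has_real_derivative_taylor_polynomial) auto
    show "(?\<psi> has_real_derivative ?\<psi>' t) (at t within {0..1})"
      by (intro DERIV_add DERIV_cmult has_real_derivative_power_div_fact)
    show "\<bar>g 1 t - (\<Sum>j\<le>k. g (Suc j) 0 * t ^ j / fact j)\<bar> \<le> ?\<psi>' t"
      using Suc.IH[of "\<lambda>j. g (Suc j)" t] Suc.prems t by auto
  qed (use Suc.prems in \<open>simp_all add: sum.atMost_Suc_shift del: sum.atMost_Suc\<close>)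
  then show ?case by simp
qed

lemma convex_segment_mem:
  assumes "convex S" "a \<in> S" "b \<in> S" "t \<in> {0..1}"
  shows "a + t *\<^sub>R (b - a) \<in> S"
proof -
  have "a + t *\<^sub>R (b - a) = (1 - t) *\<^sub>R a + t *\<^sub>R b" by (simp add: algebra_simps)
  then show ?thesis using convexD_alt[OF assms(1-3), of t] assms(4) by simp
qed

lemma convex_combination_mem:
  assumes "convex S" "u \<in> S" "v \<in> S" "t \<in> {0..1}"
  shows "t *\<^sub>R u + (1 - t) *\<^sub>R v \<in> S"
  using convexD[OF assms(1-3), of t "1 - t"] assms(4) by simp

lemma taylor_remainder_bound_segment:
  fixes E :: "nat \<Rightarrow> 'b::real_normed_vector \<Rightarrow> 'b list \<Rightarrow> real"
  assumes Y: "convex Y" "y0 \<in> Y" "y \<in> Y"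
    and E': "\<And>j z vs. j < k \<Longrightarrow> z \<in> Y \<Longrightarrow> length vs = j \<Longrightarrow>
               ((\<lambda>z'. E j z' vs) has_derivative (\<lambda>v. E (Suc j) z (v # vs))) (at z within Y)"
    and bound: "\<And>t. t \<in> {0..1} \<Longrightarrow>
      \<bar>E k (y0 + t *\<^sub>R (y - y0)) (replicate k (y - y0)) - E k y0 (replicate k (y - y0))\<bar> \<le> B + C * t"
  shows "\<bar>E 0 y [] - (\<Sum>j\<le>k. E j y0 (replicate j (y - y0)) / fact j)\<bar> \<le> B / fact k + C / fact (Suc k)"
proof -
  define s where "s = y - y0"
  define g where "g j t = E j (y0 + t *\<^sub>R s) (replicate j s)" for j t
  have "(g j has_real_derivative g (Suc j) t) (at t within {0..1})" if "j < k" "t \<in> {0..1}" for j t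
  proof -
    have z: "y0 + t *\<^sub>R s \<in> Y" using convex_segment_mem[OF Y that(2)] by (simp add: s_def)
    have E'z: "((\<lambda>z. E j z (replicate j s)) has_derivative (\<lambda>v. E (Suc j) (y0 + t *\<^sub>R s) (v # replicate j s)))
        (at (y0 + t *\<^sub>R s) within Y)"
      using E'[OF that(1) z] by simp
    have seg': "((\<lambda>t. y0 + t *\<^sub>R s) has_derivative (\<lambda>\<tau>. \<tau> *\<^sub>R s)) (at t within {0..1})"
      by (auto intro!: derivative_eq_intros)
    have seg: "(\<lambda>t. y0 + t *\<^sub>R s) ` {0..1} \<subseteq> Y"
      using convex_segment_mem[OF Y] by (auto simp: s_def)
    have "(g j has_derivative (\<lambda>\<tau>. E (Suc j) (y0 + t *\<^sub>R s) ((\<tau> *\<^sub>R s) # replicate j s)))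
        (at t within {0..1})"
      unfolding g_def by (rule has_derivative_in_compose[OF seg' has_derivative_subset[OF E'z seg]])
    moreover have "E (Suc j) (y0 + t *\<^sub>R s) ((\<tau> *\<^sub>R s) # replicate j s) = g (Suc j) t * \<tau>" for \<tau>
      using linear_scale[OF has_derivative_linear[OF E'z], of \<tau> s] by (simp add: g_def)
    ultimately show ?thesis by (simp add: has_field_derivative_def mult_commute_abs)
  qed
  from taylor_remainder_bound_real[of k g B C 1, OF this] bound
  show ?thesis by (simp add: g_def s_def)
qed

lemma taylor_remainder_bound_uniform:
  fixes E :: "nat \<Rightarrow> 'b::real_normed_vector \<Rightarrow> 'b list \<Rightarrow> real"
  assumes Y: "convex Y" "y0 \<in> Y" "y \<in> Y"
    and E': "\<And>j z vs. j < k \<Longrightarrow> z \<in> Y \<Longrightarrow> length vs = j \<Longrightarrow>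
               ((\<lambda>z'. E j z' vs) has_derivative (\<lambda>v. E (Suc j) z (v # vs))) (at z within Y)"
    and bound: "\<And>z. z \<in> Y \<Longrightarrow> \<bar>E k z (replicate k (y - y0))\<bar> \<le> M"
  shows "\<bar>E 0 y [] - (\<Sum>j\<le>k. E j y0 (replicate j (y - y0)) / fact j)\<bar> \<le> 2 * M / fact k"
proof -
  have "\<bar>E 0 y [] - (\<Sum>j\<le>k. E j y0 (replicate j (y - y0)) / fact j)\<bar> \<le> 2 * M / fact k + 0 / fact (Suc k)"
  proof (rule taylor_remainder_bound_segment[where E = E and k = k, OF Y E'])
    fix t :: real assume "t \<in> {0..1}"
    let ?z = "y0 + t *\<^sub>R (y - y0)"
    have "\<bar>E k ?z (replicate k (y - y0)) - E k y0 (replicate k (y - y0))\<bar>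
        \<le> \<bar>E k ?z (replicate k (y - y0))\<bar> + \<bar>E k y0 (replicate k (y - y0))\<bar>"
      by (rule abs_triangle_ineq4)
    also have "\<dots> \<le> M + M"
      using bound[OF convex_segment_mem[OF Y \<open>t \<in> {0..1}\<close>]] bound[OF Y(2)] by (rule add_mono)
    finally show "\<bar>E k ?z (replicate k (y - y0)) - E k y0 (replicate k (y - y0))\<bar> \<le> 2 * M + 0 * t"
      by simp
  qed
  then show ?thesis by simp
qed

lemma lipschitz_gradient_linearization_bound:
  fixes h :: "'a::real_inner \<Rightarrow> real"
  assumes X: "convex X" and h': "\<And>x. x \<in> X \<Longrightarrow> (h has_derivative (\<lambda>u. G x \<bullet> u)) (at x within X)"
    and lip: "\<And>x x'. x \<in> X \<Longrightarrow> x' \<in> X \<Longrightarrow> norm (G x' - G x) \<le> L * norm (x' - x)"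
    and u: "u \<in> X" and w: "w \<in> X"
  shows "\<bar>h u - h w - G w \<bullet> (u - w)\<bar> \<le> L / 2 * (norm (u - w))\<^sup>2"
proof -
  define E where "E j z vs = (if j = 0 then h z else G z \<bullet> hd vs)" for j :: nat and z and vs :: "'a list"
  have bound: "\<bar>E 1 (w + t *\<^sub>R (u - w)) (replicate 1 (u - w)) - E 1 w (replicate 1 (u - w))\<bar>
      \<le> 0 + L * (norm (u - w))\<^sup>2 * t" if t: "t \<in> {0..1}" for t
  proof -
    define z where "z = w + t *\<^sub>R (u - w)"
    have "\<bar>(G z - G w) \<bullet> (u - w)\<bar> \<le> norm (G z - G w) * norm (u - w)"
      by (rule Cauchy_Schwarz_ineq2)
    also have "\<dots> \<le> (L * (t * norm (u - w))) * norm (u - w)"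
      using lip[OF w convex_segment_mem[OF X w u t]] t by (intro mult_right_mono) (simp_all add: z_def)
    also have "\<dots> = L * (norm (u - w))\<^sup>2 * t" by (simp add: power2_eq_square mult_ac)
    finally show ?thesis by (simp add: E_def z_def inner_diff_left)
  qed
  have "\<bar>E 0 u [] - (\<Sum>j\<le>1. E j w (replicate j (u - w)) / fact j)\<bar>
      \<le> 0 / fact 1 + L * (norm (u - w))\<^sup>2 / fact (Suc 1)"
  proof (rule taylor_remainder_bound_segment[where E = E and k = 1, OF X w u _ bound])
    fix j z and vs :: "'a list" assume "j < 1" "z \<in> X" "length vs = j"
    then show "((\<lambda>z'. E j z' vs) has_derivative (\<lambda>v. E (Suc j) z (v # vs))) (at z within X)"
      using h' by (simp add: E_def)
  qed
  then show ?thesis by (simp add: E_def diff_diff_eq)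
qed

lemma lipschitz_gradient_convex_combination_bound:
  fixes h :: "'a::real_inner \<Rightarrow> real"
  assumes X: "convex X" and h': "\<And>x. x \<in> X \<Longrightarrow> (h has_derivative (\<lambda>u. G x \<bullet> u)) (at x within X)"
    and lip: "\<And>x x'. x \<in> X \<Longrightarrow> x' \<in> X \<Longrightarrow> norm (G x' - G x) \<le> L * norm (x' - x)"
    and u: "u \<in> X" and v: "v \<in> X" and t: "t \<in> {0..1}"
  shows "\<bar>t * h u + (1 - t) * h v - h (t *\<^sub>R u + (1 - t) *\<^sub>R v)\<bar> \<le> L / 2 * t * (1 - t) * (norm (u - v))\<^sup>2"
proof -
  define w where "w = t *\<^sub>R u + (1 - t) *\<^sub>R v"
  define c where "c = G w \<bullet> (u - v)"
  define N where "N = L / 2 * (norm (u - v))\<^sup>2"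
  have w: "w \<in> X" unfolding w_def by (rule convex_combination_mem[OF X u v t])
  have uw: "u - w = (1 - t) *\<^sub>R (u - v)" and vw: "v - w = (- t) *\<^sub>R (u - v)"
    by (simp_all add: w_def algebra_simps)
  have bu: "\<bar>h u - h w - (1 - t) * c\<bar> \<le> (1 - t)\<^sup>2 * N"
    using lipschitz_gradient_linearization_bound[OF X h' lip u w] t
    by (simp add: uw c_def N_def power_mult_distrib mult_ac)
  have bv: "\<bar>h v - h w + t * c\<bar> \<le> t\<^sup>2 * N"
    using lipschitz_gradient_linearization_bound[OF X h' lip v w] t
    by (simp add: vw c_def N_def power_mult_distrib mult_ac)
  have "\<bar>t * h u + (1 - t) * h v - h w\<bar> = \<bar>t * (h u - h w - (1 - t) * c) + (1 - t) * (h v - h w + t * c)\<bar>"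
    by (simp add: algebra_simps)
  also have "\<dots> \<le> t * \<bar>h u - h w - (1 - t) * c\<bar> + (1 - t) * \<bar>h v - h w + t * c\<bar>"
    using t by (auto intro: order_trans[OF abs_triangle_ineq] simp: abs_mult)
  also have "\<dots> \<le> t * ((1 - t)\<^sup>2 * N) + (1 - t) * (t\<^sup>2 * N)"
    using bu bv t by (intro add_mono mult_left_mono) auto
  also have "\<dots> = t * (1 - t) * N" by (simp add: power2_eq_square algebra_simps)
  finally show ?thesis by (simp add: w_def N_def mult_ac)
qed

section \<open>Multilinear forms and derivative tensors\<close>

lemma has_derivative_unique_convex:
  fixes g :: "'a::euclidean_space \<Rightarrow> 'c::real_normed_vector"
  assumes S: "convex S" "interior S \<noteq> {}" and y: "y \<in> S"
    and A: "(g has_derivative A) (at y within S)" and B: "(g has_derivative B) (at y within S)"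
  shows "A = B"
proof -
  have on_S: "A (w - y) = B (w - y)" if w: "w \<in> S" for w
  proof -
    define \<gamma> where "\<gamma> t = y + t *\<^sub>R (w - y)" for t :: real
    have \<gamma>_S: "\<gamma> ` {0..1} \<subseteq> S"
    proof
      fix p assume "p \<in> \<gamma> ` {0..1}"
      then obtain t where t: "t \<in> {0..1}" "p = \<gamma> t" by auto
      have "p = (1 - t) *\<^sub>R y + t *\<^sub>R w" using t by (simp add: \<gamma>_def algebra_simps)
      then show "p \<in> S" using S(1) y w t by (simp add: convex_def)
    qed
    have \<gamma>': "(\<gamma> has_derivative (\<lambda>t. t *\<^sub>R (w - y))) (at 0 within {0..1})"
      unfolding \<gamma>_def by (auto intro!: derivative_eq_intros)
    have "((\<lambda>t. g (\<gamma> t)) has_derivative (\<lambda>t. L (t *\<^sub>R (w - y)))) (at 0 within {0..1})"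
      if "(g has_derivative L) (at y within S)" for L
      by (rule has_derivative_in_compose[OF \<gamma>']) (use has_derivative_subset[OF that \<gamma>_S] in \<open>simp add: \<gamma>_def\<close>)
    from this[OF A] this[OF B] have "(\<lambda>t. A (t *\<^sub>R (w - y))) = (\<lambda>t. B (t *\<^sub>R (w - y)))"
      using frechet_derivative_unique_within_closed_interval[of "0::real" 1 0] by (auto simp: cbox_interval)
    then show ?thesis by (metis scaleR_one)
  qed
  show ?thesis
  proof
    fix h
    \<comment> \<open>the directions \<open>w - y\<close> with \<open>w \<in> S\<close> span the space, since S has interior points\<close>
    have "affine hull S = (\<lambda>x. y + x) ` span ((\<lambda>w. - y + w) ` S)"
      by (rule affine_hull_span_gen, rule hull_inc, rule y)
    then have "y + h \<in> (\<lambda>x. y + x) ` span ((\<lambda>w. - y + w) ` S)"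
      using affine_hull_nonempty_interior[OF S(2)] by (metis UNIV_I)
    then obtain v where v: "v \<in> span ((\<lambda>w. - y + w) ` S)" "y + h = y + v"
      by blast
    have "A v = B v"
    proof (rule linear_eq_on_span[OF has_derivative_linear[OF A] has_derivative_linear[OF B] _ v(1)])
      fix b assume "b \<in> (\<lambda>w. - y + w) ` S"
      then show "A b = B b" using on_S by auto
    qed
    then show "A h = B h" using v(2) by simp
  qed
qed

definition multilinear :: "nat \<Rightarrow> ('b::real_vector list \<Rightarrow> 'c::real_vector) \<Rightarrow> bool" where
  "multilinear k T \<longleftrightarrow> (\<forall>i<k. \<forall>vs. length vs = k \<longrightarrow> linear (\<lambda>v. T (vs[i := v])))"

lemma multilinear_Cons:
  fixes T :: "'b::real_vector list \<Rightarrow> 'c::real_vector"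
  assumes "multilinear (Suc k) T"
  shows "multilinear k (\<lambda>vs. T (a # vs))"
  unfolding multilinear_def
proof (intro allI impI)
  fix i and vs :: "'b list" assume "i < k" "length vs = k"
  then have "Suc i < Suc k" "length (a # vs) = Suc k" by auto
  then have "linear (\<lambda>v. T ((a # vs)[Suc i := v]))" using assms unfolding multilinear_def by blast
  then show "linear (\<lambda>v. T (a # vs[i := v]))" by simp
qed

lemma linear_multilinear_hd:
  assumes "multilinear (Suc k) T" and "length vs = k"
  shows "linear (\<lambda>v. T (v # vs))"
proof -
  have "linear (\<lambda>v. T ((0 # vs)[0 := v]))"
    using assms unfolding multilinear_def by (metis length_Cons zero_less_Suc)
  then show ?thesis by simp
qed

lemma multilinear_diff:
  "multilinear k T \<Longrightarrow> multilinear k T' \<Longrightarrow> multilinear k (\<lambda>vs. T vs - T' vs)"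
  unfolding multilinear_def by (auto intro: linear_compose_sub)

lemma multilinear_bounded:
  fixes T :: "'b::euclidean_space list \<Rightarrow> 'c::real_normed_vector"
  assumes "multilinear k T"
  shows "\<exists>C. \<forall>vs. length vs = k \<longrightarrow> (\<forall>v\<in>set vs. norm v \<le> 1) \<longrightarrow> norm (T vs) \<le> C"
  using assms
proof (induction k arbitrary: T)
  case 0
  then show ?case by auto
next
  case (Suc k)
  obtain C where C: "\<And>b vs. length vs = k \<Longrightarrow> \<forall>v\<in>set vs. norm v \<le> 1 \<Longrightarrow> norm (T (b # vs)) \<le> C b"
    using Suc.IH[OF multilinear_Cons[OF Suc.prems]] by metis
  have "norm (T vs) \<le> (\<Sum>b\<in>Basis. \<bar>C b\<bar>)"
    if "length vs = Suc k" and unit: "\<forall>v\<in>set vs. norm v \<le> 1" for vs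
  proof -
    obtain v vs' where vs: "vs = v # vs'" "length vs' = k"
      using \<open>length vs = Suc k\<close> by (cases vs) auto
    have lin: "linear (\<lambda>v. T (v # vs'))" by (rule linear_multilinear_hd[OF Suc.prems vs(2)])
    have "T vs = (\<Sum>b\<in>Basis. (v \<bullet> b) *\<^sub>R T (b # vs'))"
      using linear_sum[OF lin, of "\<lambda>b. (v \<bullet> b) *\<^sub>R b" Basis] linear_scale[OF lin]
      by (simp add: vs euclidean_representation o_def)
    also have "norm \<dots> \<le> (\<Sum>b\<in>Basis. norm ((v \<bullet> b) *\<^sub>R T (b # vs')))" by (rule norm_sum)
    also have "\<dots> \<le> (\<Sum>b\<in>Basis. \<bar>C b\<bar>)"
    proof (rule sum_mono)
      fix b :: 'b assume "b \<in> Basis"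
      then have "\<bar>v \<bullet> b\<bar> \<le> 1"
        using Basis_le_norm[of b v] unit vs by auto
      moreover have "norm (T (b # vs')) \<le> \<bar>C b\<bar>"
        using C[OF vs(2)] unit vs by (meson abs_ge_self list.set_intros(2) order_trans)
      ultimately have "\<bar>v \<bullet> b\<bar> * norm (T (b # vs')) \<le> 1 * \<bar>C b\<bar>"
        by (intro mult_mono) auto
      then show "norm ((v \<bullet> b) *\<^sub>R T (b # vs')) \<le> \<bar>C b\<bar>" by simp
    qed
    finally show ?thesis .
  qed
  then show ?case by blast
qed

lemma multilinear_map_scaleR:
  assumes "multilinear k T" and "length vs = k"
  shows "T (map (\<lambda>v. c *\<^sub>R v) vs) = c ^ k *\<^sub>R T vs"
  using assms
proof (induction k arbitrary: T vs)
  case (Suc k)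
  then obtain v vs' where vs: "vs = v # vs'" "length vs' = k" by (cases vs) auto
  have "T (map (\<lambda>v. c *\<^sub>R v) vs) = c *\<^sub>R T (v # map (\<lambda>v. c *\<^sub>R v) vs')"
    using linear_scale[OF linear_multilinear_hd[OF Suc.prems(1)]] vs by simp
  also have "T (v # map (\<lambda>v. c *\<^sub>R v) vs') = c ^ k *\<^sub>R T (v # vs')"
    using Suc.IH[OF multilinear_Cons[OF Suc.prems(1)] vs(2)] .
  finally show ?case using vs by simp
qed simp

lemma norm_multilinear_replicate_le:
  fixes T :: "'b::euclidean_space list \<Rightarrow> 'c::real_normed_vector"
  assumes "multilinear k T"
  shows "norm (T (replicate k s)) \<le> tnorm k T * norm s ^ k"
proof -
  define u where "u = (if s = 0 then (SOME b. b \<in> Basis) else s /\<^sub>R norm s)"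
  have "(SOME b. b \<in> (Basis :: 'b set)) \<in> Basis" by (rule someI_ex) (use nonempty_Basis in blast)
  then have "norm u = 1" by (simp add: u_def)
  have "norm s *\<^sub>R u = s" by (simp add: u_def)
  then have "T (replicate k s) = norm s ^ k *\<^sub>R T (replicate k u)"
    using multilinear_map_scaleR[OF assms, of "replicate k u" "norm s"] by simp
  moreover have "norm (T (replicate k u)) \<le> tnorm k T"
    unfolding tnorm_def
  proof (rule cSUP_upper)
    show "replicate k u \<in> {vs. length vs = k \<and> (\<forall>v\<in>set vs. norm v \<le> 1)}"
      using \<open>norm u = 1\<close> by simp
    show "bdd_above ((\<lambda>vs. norm (T vs)) ` {vs. length vs = k \<and> (\<forall>v\<in>set vs. norm v \<le> 1)})"
      using multilinear_bounded[OF assms] by (auto intro: bdd_aboveI2)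
  qed
  ultimately have "norm (T (replicate k s)) \<le> norm s ^ k * tnorm k T"
    by (simp add: mult_left_mono)
  then show ?thesis by (simp only: mult.commute)
qed

lemma linear_derivative_of_linear_family:
  fixes F :: "'p::real_vector \<Rightarrow> 'a::euclidean_space \<Rightarrow> 'c::real_normed_vector"
  assumes S: "convex S" "interior S \<noteq> {}" "y \<in> S"
    and F': "\<And>w. (F w has_derivative F' w) (at y within S)"
    and lin: "\<And>z. z \<in> S \<Longrightarrow> linear (\<lambda>w. F w z)"
  shows "linear (\<lambda>w. F' w b)"
proof -
  have F_eq: "((\<lambda>z. G z) has_derivative G') (at y within S) \<Longrightarrow> (\<And>z. z \<in> S \<Longrightarrow> G z = F w z) \<Longrightarrow> F' w = G'"
    for G G' w
  proof (rule has_derivative_unique_convex[OF S F'])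
    assume G': "(G has_derivative G') (at y within S)" and eq: "\<And>z. z \<in> S \<Longrightarrow> G z = F w z"
    from G' show "(F w has_derivative G') (at y within S)"
      by (rule has_derivative_transform_within[where d=1]) (use S eq in auto)
  qed
  show ?thesis
  proof (rule linearI)
    fix w1 w2
    have "((\<lambda>z. F w1 z + F w2 z) has_derivative (\<lambda>b. F' w1 b + F' w2 b)) (at y within S)"
      by (intro has_derivative_add F')
    then have "F' (w1 + w2) = (\<lambda>b. F' w1 b + F' w2 b)"
      by (rule F_eq) (simp add: linear_add[OF lin])
    then show "F' (w1 + w2) b = F' w1 b + F' w2 b" by simp
  next
    fix r w
    have "((\<lambda>z. r *\<^sub>R F w z) has_derivative (\<lambda>b. r *\<^sub>R F' w b)) (at y within S)"
      by (intro has_derivative_scaleR_right F')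
    then have "F' (r *\<^sub>R w) = (\<lambda>b. r *\<^sub>R F' w b)"
      by (rule F_eq) (simp add: linear_scale[OF lin])
    then show "F' (r *\<^sub>R w) b = r *\<^sub>R F' w b" by simp
  qed
qed

lemma linear_if_linear_inner:
  fixes G :: "'p::real_vector \<Rightarrow> 'a::real_inner"
  assumes "\<And>b. linear (\<lambda>w. G w \<bullet> b)"
  shows "linear G"
proof (rule linearI)
  fix w1 w2 show "G (w1 + w2) = G w1 + G w2"
  proof (rule vector_eq_rdot[THEN iffD1], rule allI)
    fix b show "G (w1 + w2) \<bullet> b = (G w1 + G w2) \<bullet> b"
      using linear_add[OF assms[of b]] by (simp add: inner_add_left)
  qed
next
  fix r w show "G (r *\<^sub>R w) = r *\<^sub>R G w"
  proof (rule vector_eq_rdot[THEN iffD1], rule allI)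
    fix b show "G (r *\<^sub>R w) \<bullet> b = (r *\<^sub>R G w) \<bullet> b"
      using linear_scale[OF assms[of b]] by simp
  qed
qed

lemma y_derivs_multilinear:
  fixes D :: "nat \<Rightarrow> 'a \<Rightarrow> 'b::euclidean_space \<Rightarrow> 'b list \<Rightarrow> real"
  assumes Y: "convex Y" "interior Y \<noteq> {}" and D: "y_derivs X Y f k D" and x: "x \<in> X"
    and "j \<le> k" and "y \<in> Y"
  shows "multilinear j (D j x y)"
  using \<open>j \<le> k\<close> \<open>y \<in> Y\<close>
proof (induction j arbitrary: y)
  case 0
  then show ?case by (simp add: multilinear_def)
next
  case (Suc j)
  have D': "((\<lambda>z. D j x z vs) has_derivative (\<lambda>v. D (Suc j) x y (v # vs))) (at y within Y)"
    if "length vs = j" for vs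
    using D x Suc.prems that unfolding y_derivs_def by auto
  show ?case unfolding multilinear_def
  proof (intro allI impI)
    fix i and vs :: "'b list" assume "i < Suc j" "length vs = Suc j"
    then obtain a vs' where vs: "vs = a # vs'" "length vs' = j" by (cases vs) auto
    show "linear (\<lambda>v. D (Suc j) x y (vs[i := v]))"
    proof (cases i)
      case 0
      then show ?thesis using has_derivative_linear[OF D'[OF vs(2)]] vs by simp
    next
      case (Suc i')
      have "linear (\<lambda>w. D (Suc j) x y (a # vs'[i' := w]))"
      proof (rule linear_derivative_of_linear_family[OF Y \<open>y \<in> Y\<close>, where F = "\<lambda>w z. D j x z (vs'[i' := w])"])
        show "((\<lambda>z. D j x z (vs'[i' := w])) has_derivative (\<lambda>b. D (Suc j) x y (b # vs'[i' := w]))) (at y within Y)"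
          for w using D' vs(2) by simp
        show "linear (\<lambda>w. D j x z (vs'[i' := w]))" if "z \<in> Y" for z
        proof -
          have "multilinear j (D j x z)" using Suc.IH[OF _ that] Suc.prems by simp
          then show ?thesis using \<open>i < Suc j\<close> \<open>i = Suc i'\<close> vs(2) unfolding multilinear_def by simp
        qed
      qed
      then show ?thesis using vs Suc by simp
    qed
  qed
qed

lemma xy_deriv_multilinear:
  fixes Dk :: "'a::euclidean_space \<Rightarrow> 'b::real_vector \<Rightarrow> 'b list \<Rightarrow> real"
  assumes X: "convex X" "interior X \<noteq> {}" and Dx: "xy_deriv X Y k Dk Dx"
    and Dk: "\<And>x. x \<in> X \<Longrightarrow> multilinear k (Dk x y)" and x: "x \<in> X" and y: "y \<in> Y"
  shows "multilinear k (Dx x y)"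
  unfolding multilinear_def
proof (intro allI impI)
  fix i and vs :: "'b list" assume i: "i < k" and "length vs = k"
  show "linear (\<lambda>v. Dx x y (vs[i := v]))"
  proof (rule linear_if_linear_inner, rule linear_derivative_of_linear_family[OF X x])
    show "((\<lambda>x'. Dk x' y (vs[i := w])) has_derivative (\<lambda>b. Dx x y (vs[i := w]) \<bullet> b)) (at x within X)"
      for w using Dx x y \<open>length vs = k\<close> unfolding xy_deriv_def by simp
    show "linear (\<lambda>w. Dk z y (vs[i := w]))" if "z \<in> X" for z
      using Dk[OF that] i \<open>length vs = k\<close> unfolding multilinear_def by blast
  qed
qed

section \<open>Weak convexity\<close>

text \<open>For convex X this is convexity of \<open>\<phi> + c/2 \<parallel>\<cdot>\<parallel>\<^sup>2\<close> on X, written without the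
  auxiliary function; a negative c means strong convexity.\<close>

definition weakly_convex_on :: "'a::real_normed_vector set \<Rightarrow> ('a \<Rightarrow> real) \<Rightarrow> real \<Rightarrow> bool" where
  "weakly_convex_on X \<phi> c \<longleftrightarrow> (\<forall>u\<in>X. \<forall>v\<in>X. \<forall>t\<in>{0..1}.
     \<phi> (t *\<^sub>R u + (1 - t) *\<^sub>R v) \<le> t * \<phi> u + (1 - t) * \<phi> v + c / 2 * t * (1 - t) * (norm (u - v))\<^sup>2)"

lemma weakly_convex_onD:
  "weakly_convex_on X \<phi> c \<Longrightarrow> u \<in> X \<Longrightarrow> v \<in> X \<Longrightarrow> t \<in> {0..1} \<Longrightarrow>
    \<phi> (t *\<^sub>R u + (1 - t) *\<^sub>R v) \<le> t * \<phi> u + (1 - t) * \<phi> v + c / 2 * t * (1 - t) * (norm (u - v))\<^sup>2"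
  unfolding weakly_convex_on_def by blast

lemma weakly_convex_on_lipschitz_gradient:
  fixes h :: "'a::real_inner \<Rightarrow> real"
  assumes "convex X" and "\<And>x. x \<in> X \<Longrightarrow> (h has_derivative (\<lambda>u. G x \<bullet> u)) (at x within X)"
    and "\<And>x x'. x \<in> X \<Longrightarrow> x' \<in> X \<Longrightarrow> norm (G x' - G x) \<le> L * norm (x' - x)"
  shows "weakly_convex_on X h L"
  unfolding weakly_convex_on_def
proof (intro ballI)
  fix u v t assume "u \<in> X" "v \<in> X" "t \<in> {0..1::real}"
  from lipschitz_gradient_convex_combination_bound[OF assms this]
  show "h (t *\<^sub>R u + (1 - t) *\<^sub>R v) \<le> t * h u + (1 - t) * h v + L / 2 * t * (1 - t) * (norm (u - v))\<^sup>2"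
    by linarith
qed

lemma weakly_convex_on_perturb:
  assumes \<phi>: "weakly_convex_on X \<phi> a"
    and close: "\<And>u v t. u \<in> X \<Longrightarrow> v \<in> X \<Longrightarrow> t \<in> {0..1} \<Longrightarrow>
      \<bar>t * (\<phi> u - \<psi> u) + (1 - t) * (\<phi> v - \<psi> v) - (\<phi> (t *\<^sub>R u + (1 - t) *\<^sub>R v) - \<psi> (t *\<^sub>R u + (1 - t) *\<^sub>R v))\<bar>
        \<le> c * t * (1 - t) * (norm (u - v))\<^sup>2"
  shows "weakly_convex_on X \<psi> (a + 2 * c)"
  unfolding weakly_convex_on_def
proof (intro ballI)
  fix u v t assume uvt: "u \<in> X" "v \<in> X" "t \<in> {0..1::real}"
  let ?w = "t *\<^sub>R u + (1 - t) *\<^sub>R v"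
  have "t * (\<phi> u - \<psi> u) + (1 - t) * (\<phi> v - \<psi> v) - (\<phi> ?w - \<psi> ?w)
      = (t * \<phi> u + (1 - t) * \<phi> v - \<phi> ?w) - (t * \<psi> u + (1 - t) * \<psi> v - \<psi> ?w)"
    by (simp add: algebra_simps)
  moreover have "(a + 2 * c) / 2 * t * (1 - t) * (norm (u - v))\<^sup>2
      = a / 2 * t * (1 - t) * (norm (u - v))\<^sup>2 + c * t * (1 - t) * (norm (u - v))\<^sup>2"
    by (simp add: field_simps)
  ultimately show "\<psi> ?w \<le> t * \<psi> u + (1 - t) * \<psi> v + (a + 2 * c) / 2 * t * (1 - t) * (norm (u - v))\<^sup>2"
    using weakly_convex_onD[OF \<phi> uvt] abs_le_D1[OF close[OF uvt]] by argo
qed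

lemma power2_norm_convex_combination:
  fixes a b :: "'a::real_inner"
  shows "(norm (t *\<^sub>R a + (1 - t) *\<^sub>R b))\<^sup>2
    = t * (norm a)\<^sup>2 + (1 - t) * (norm b)\<^sup>2 - t * (1 - t) * (norm (a - b))\<^sup>2"
  by (simp add: power2_norm_eq_inner inner_commute algebra_simps)

lemma weakly_convex_on_add_quadratic:
  fixes \<phi> :: "'a::real_inner \<Rightarrow> real"
  assumes "weakly_convex_on X \<phi> c"
  shows "weakly_convex_on X (\<lambda>u. \<phi> u + l / 2 * (norm (u - x))\<^sup>2) (c - l)"
  unfolding weakly_convex_on_def
proof (intro ballI)
  fix u v t assume uvt: "u \<in> X" "v \<in> X" "t \<in> {0..1::real}"
  have "t *\<^sub>R u + (1 - t) *\<^sub>R v - x = t *\<^sub>R (u - x) + (1 - t) *\<^sub>R (v - x)"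
    and "(u - x) - (v - x) = u - v" by (simp_all add: algebra_simps)
  then have q: "(norm (t *\<^sub>R u + (1 - t) *\<^sub>R v - x))\<^sup>2
      = t * (norm (u - x))\<^sup>2 + (1 - t) * (norm (v - x))\<^sup>2 - t * (1 - t) * (norm (u - v))\<^sup>2"
    by (metis power2_norm_convex_combination)
  have "l / 2 * (norm (t *\<^sub>R u + (1 - t) *\<^sub>R v - x))\<^sup>2
      = t * (l / 2 * (norm (u - x))\<^sup>2) + (1 - t) * (l / 2 * (norm (v - x))\<^sup>2)
        - l / 2 * (t * (1 - t) * (norm (u - v))\<^sup>2)"
    unfolding q by (simp add: field_simps)
  moreover have "(c - l) / 2 * t * (1 - t) * (norm (u - v))\<^sup>2
      = c / 2 * t * (1 - t) * (norm (u - v))\<^sup>2 - l / 2 * (t * (1 - t) * (norm (u - v))\<^sup>2)"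
    by (simp add: algebra_simps diff_divide_distrib)
  moreover have "t * (\<phi> u + l / 2 * (norm (u - x))\<^sup>2) + (1 - t) * (\<phi> v + l / 2 * (norm (v - x))\<^sup>2)
      = t * \<phi> u + (1 - t) * \<phi> v + (t * (l / 2 * (norm (u - x))\<^sup>2) + (1 - t) * (l / 2 * (norm (v - x))\<^sup>2))"
    by (simp add: algebra_simps)
  ultimately show "\<phi> (t *\<^sub>R u + (1 - t) *\<^sub>R v) + l / 2 * (norm (t *\<^sub>R u + (1 - t) *\<^sub>R v - x))\<^sup>2
      \<le> t * (\<phi> u + l / 2 * (norm (u - x))\<^sup>2) + (1 - t) * (\<phi> v + l / 2 * (norm (v - x))\<^sup>2)
        + (c - l) / 2 * t * (1 - t) * (norm (u - v))\<^sup>2"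
    using weakly_convex_onD[OF assms uvt] by linarith
qed

section \<open>Moreau envelopes and proximal points\<close>

lemma strongly_convex_gap_bound:
  assumes F: "weakly_convex_on X F (- m)" and X: "convex X" and uvt: "u \<in> X" "v \<in> X" "t \<in> {0..1}"
    and e: "\<And>w. w \<in> X \<Longrightarrow> e \<le> F w"
  shows "m / 2 * t * (1 - t) * (norm (u - v))\<^sup>2 \<le> t * (F u - e) + (1 - t) * (F v - e)"
proof -
  have "e \<le> F (t *\<^sub>R u + (1 - t) *\<^sub>R v)"
    using e convex_combination_mem[OF X uvt] by blast
  also have "\<dots> \<le> t * F u + (1 - t) * F v - m / 2 * t * (1 - t) * (norm (u - v))\<^sup>2"
    using weakly_convex_onD[OF F uvt] by simp
  moreover have "t * (F u - e) + (1 - t) * (F v - e) = t * F u + (1 - t) * F v - e"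
    by (simp add: algebra_simps)
  ultimately show ?thesis by linarith
qed

lemma strongly_convex_minimizing_Cauchy:
  fixes us :: "nat \<Rightarrow> 'a::real_normed_vector"
  assumes F: "weakly_convex_on X F (- m)" and X: "convex X" and "0 < m"
    and e: "\<And>w. w \<in> X \<Longrightarrow> e \<le> F w" and us: "\<And>n. us n \<in> X" "(\<lambda>n. F (us n)) \<longlonglongrightarrow> e"
  shows "Cauchy us"
proof (rule metric_CauchyI)
  fix \<epsilon> :: real assume "0 < \<epsilon>"
  define r where "r = m * \<epsilon>\<^sup>2 / 8"
  have "0 < r" using \<open>0 < \<epsilon>\<close> \<open>0 < m\<close> by (simp add: r_def)
  then obtain N where N: "\<forall>n\<ge>N. \<bar>F (us n) - e\<bar> < r"
    using LIMSEQ_D[OF us(2)] by (metis real_norm_def)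
  have "dist (us a) (us b) < \<epsilon>" if "N \<le> a" "N \<le> b" for a b
  proof -
    have "m * (norm (us a - us b))\<^sup>2 / 8 \<le> (F (us a) - e) / 2 + (F (us b) - e) / 2"
      using strongly_convex_gap_bound[OF F X us(1) us(1) _ e, of "1 / 2" a b] by simp
    also have "\<dots> < r"
    proof -
      have "F (us a) - e < r" "F (us b) - e < r"
        using N[rule_format, OF that(1)] N[rule_format, OF that(2)] by (simp_all add: abs_less_iff)
      then have "(F (us a) - e) / 2 + (F (us b) - e) / 2 < r / 2 + r / 2"
        by (intro add_strict_mono divide_strict_right_mono) simp_all
      then show ?thesis by simp
    qed
    finally have "(norm (us a - us b))\<^sup>2 < \<epsilon>\<^sup>2" using \<open>0 < m\<close> by (simp add: r_def)
    then show ?thesis using \<open>0 < \<epsilon>\<close> by (simp add: dist_norm power_less_imp_less_base)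
  qed
  then show "\<exists>M. \<forall>a\<ge>M. \<forall>b\<ge>M. dist (us a) (us b) < \<epsilon>" by blast
qed

lemma strongly_convex_quadratic_growth:
  assumes F: "weakly_convex_on X F (- m)" and X: "convex X"
    and e: "\<And>w. w \<in> X \<Longrightarrow> e \<le> F w"
    and us: "\<And>n. us n \<in> X" "us \<longlonglongrightarrow> p" "(\<lambda>n. F (us n)) \<longlonglongrightarrow> e" and u: "u \<in> X"
  shows "e + m / 2 * (norm (u - p))\<^sup>2 \<le> F u"
proof -
  have "(1 - t) * (m / 2 * (norm (u - p))\<^sup>2) \<le> F u - e" if t: "t \<in> {0<..<1}" for t
  proof -
    have "t \<in> {0..1}" using t by simp
    from strongly_convex_gap_bound[OF F X u us(1) this e]
    have "m / 2 * t * (1 - t) * (norm (u - us n))\<^sup>2 - (1 - t) * (F (us n) - e) \<le> t * (F u - e)" for n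
      by (simp add: algebra_simps)
    moreover have "(\<lambda>n. m / 2 * t * (1 - t) * (norm (u - us n))\<^sup>2 - (1 - t) * (F (us n) - e))
        \<longlonglongrightarrow> m / 2 * t * (1 - t) * (norm (u - p))\<^sup>2 - (1 - t) * (e - e)"
      by (intro tendsto_intros us)
    ultimately have "m / 2 * t * (1 - t) * (norm (u - p))\<^sup>2 - (1 - t) * (e - e) \<le> t * (F u - e)"
      by (blast intro: LIMSEQ_le_const2)
    then have "t * ((1 - t) * (m / 2 * (norm (u - p))\<^sup>2)) \<le> t * (F u - e)" by (simp add: ac_simps)
    then show ?thesis using t by simp
  qed
  then have ev: "eventually (\<lambda>t. (1 - t) * (m / 2 * (norm (u - p))\<^sup>2) \<le> F u - e) (at_right 0)"
    using eventually_at_right_real[of 0 "1::real"] by (auto elim: eventually_mono)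
  have "((\<lambda>t. (1 - t) * (m / 2 * (norm (u - p))\<^sup>2)) \<longlongrightarrow> (1 - 0) * (m / 2 * (norm (u - p))\<^sup>2))
      (at_right 0)"
    by (intro tendsto_intros)
  from tendsto_upperbound[OF this ev trivial_limit_at_right_real] show ?thesis by simp
qed

lemma strongly_convex_minimizing_limit:
  fixes F :: "'a::{real_normed_vector, complete_space} \<Rightarrow> real"
  assumes X: "convex X" "X \<noteq> {}" and F: "weakly_convex_on X F (- m)" "0 < m" "bdd_below (F ` X)"
  shows "\<exists>p us. (\<forall>n. us n \<in> X) \<and> us \<longlonglongrightarrow> p \<and> (\<lambda>n. F (us n)) \<longlonglongrightarrow> Inf (F ` X) \<and>
    (\<forall>u\<in>X. Inf (F ` X) + m / 2 * (norm (u - p))\<^sup>2 \<le> F u)"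
proof -
  have "Inf (F ` X) \<in> closure (F ` X)" by (rule closure_contains_Inf) (use X F in auto)
  then obtain ys where ys: "\<And>n. ys n \<in> F ` X" "ys \<longlonglongrightarrow> Inf (F ` X)"
    unfolding closure_sequential by blast
  then have "\<forall>n. \<exists>u. u \<in> X \<and> ys n = F u" by blast
  then obtain us where us: "\<And>n. us n \<in> X" "\<And>n. ys n = F (us n)" by metis
  have e: "\<And>w. w \<in> X \<Longrightarrow> Inf (F ` X) \<le> F w" by (rule cINF_lower[OF F(3)])
  have "ys = (\<lambda>n. F (us n))" using us(2) by auto
  with ys(2) have lim: "(\<lambda>n. F (us n)) \<longlonglongrightarrow> Inf (F ` X)" by simp
  have "Cauchy us" by (rule strongly_convex_minimizing_Cauchy[OF F(1) X(1) F(2) e us(1) lim])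
  then obtain p where "us \<longlonglongrightarrow> p" using Cauchy_convergent_iff convergent_def by blast
  with strongly_convex_quadratic_growth[OF F(1) X(1) e us(1) this lim] us(1) lim show ?thesis by blast
qed

text \<open>The proximal point, as the limit of a minimising sequence: X need not be closed, so the
  infimum defining the Moreau envelope need not be attained.\<close>

definition prox_limit :: "'a::real_normed_vector set \<Rightarrow> ('a \<Rightarrow> real) \<Rightarrow> real \<Rightarrow> real \<Rightarrow> 'a \<Rightarrow> 'a \<Rightarrow> bool" where
  "prox_limit X \<phi> l m x p \<longleftrightarrow>
     (\<exists>us. (\<forall>n. us n \<in> X) \<and> us \<longlonglongrightarrow> p \<and>
        (\<lambda>n. \<phi> (us n) + l / 2 * (norm (us n - x))\<^sup>2) \<longlonglongrightarrow> moreau X \<phi> l x) \<and>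
     (\<forall>u\<in>X. moreau X \<phi> l x + m / 2 * (norm (u - p))\<^sup>2 \<le> \<phi> u + l / 2 * (norm (u - x))\<^sup>2)"

lemma prox_limit_exists:
  fixes \<phi> :: "'a::{real_inner, complete_space} \<Rightarrow> real"
  assumes "convex X" "X \<noteq> {}" "weakly_convex_on X \<phi> c" "c < l"
    and "bdd_below ((\<lambda>u. \<phi> u + l / 2 * (norm (u - x))\<^sup>2) ` X)"
  shows "\<exists>p. prox_limit X \<phi> l (l - c) x p"
proof -
  have "weakly_convex_on X (\<lambda>u. \<phi> u + l / 2 * (norm (u - x))\<^sup>2) (- (l - c))"
    using weakly_convex_on_add_quadratic[OF assms(3), of l x] by simp
  from strongly_convex_minimizing_limit[OF assms(1,2) this _ assms(5)] assms(4)
  show ?thesis unfolding prox_limit_def moreau_def by auto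
qed

lemma power2_norm_diff_split:
  fixes u x z :: "'a::real_inner"
  shows "(norm (u - z))\<^sup>2 = (norm (u - x))\<^sup>2 + 2 * ((x - u) \<bullet> (z - x)) + (norm (z - x))\<^sup>2"
proof -
  have "u - z = (u - x) - (z - x)" by simp
  then show ?thesis by (simp add: power2_norm_eq_inner inner_commute algebra_simps)
qed

lemma prox_limit_moreau_lower:
  fixes \<phi> :: "'a::real_inner \<Rightarrow> real"
  assumes p: "prox_limit X \<phi> l m x p" and "0 < m" and u: "u \<in> X"
  shows "moreau X \<phi> l x + (l *\<^sub>R (x - p)) \<bullet> (z - x) - (l\<^sup>2 / (2 * m) + \<bar>l\<bar> / 2) * (norm (z - x))\<^sup>2
    \<le> \<phi> u + l / 2 * (norm (u - z))\<^sup>2"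
proof -
  define r d where "r = norm (u - p)" and "d = norm (z - x)"
  have grow: "moreau X \<phi> l x + m / 2 * r\<^sup>2 \<le> \<phi> u + l / 2 * (norm (u - x))\<^sup>2"
    using p u unfolding prox_limit_def r_def by blast
  have split: "l / 2 * (norm (u - z))\<^sup>2
      = l / 2 * (norm (u - x))\<^sup>2 + (l *\<^sub>R (x - p)) \<bullet> (z - x) + l * ((p - u) \<bullet> (z - x)) + l / 2 * d\<^sup>2"
    unfolding power2_norm_diff_split[of u z x] d_def by (simp add: algebra_simps)
  have "\<bar>l * ((p - u) \<bullet> (z - x))\<bar> \<le> \<bar>l\<bar> * (r * d)"
    unfolding abs_mult r_def d_def
    by (intro mult_left_mono) (auto simp: norm_minus_commute intro: order_trans[OF Cauchy_Schwarz_ineq2])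
  moreover have "- (l\<^sup>2 / (2 * m) * d\<^sup>2) \<le> m / 2 * r\<^sup>2 - \<bar>l\<bar> * (r * d)"
    \<comment> \<open>AM-GM: the growth around p absorbs the cross term\<close>
  proof -
    have "0 \<le> (m * r - \<bar>l\<bar> * d)\<^sup>2 / (2 * m)" using \<open>0 < m\<close> by simp
    also have "\<dots> = m / 2 * r\<^sup>2 - \<bar>l\<bar> * (r * d) + l\<^sup>2 / (2 * m) * d\<^sup>2"
      using \<open>0 < m\<close> by (simp add: power2_eq_square field_simps)
    finally show ?thesis by simp
  qed
  moreover have "- (\<bar>l\<bar> / 2 * d\<^sup>2) \<le> l / 2 * d\<^sup>2" by (simp add: abs_if)
  moreover have "(l\<^sup>2 / (2 * m) + \<bar>l\<bar> / 2) * d\<^sup>2 = l\<^sup>2 / (2 * m) * d\<^sup>2 + \<bar>l\<bar> / 2 * d\<^sup>2"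
    by (simp add: distrib_right)
  ultimately show ?thesis using grow unfolding split d_def[symmetric] by (smt (verit) abs_le_iff)
qed

lemma prox_limit_moreau_upper:
  fixes \<phi> :: "'a::real_inner \<Rightarrow> real"
  assumes p: "prox_limit X \<phi> l m x p" and "0 < m"
  shows "moreau X \<phi> l z \<le> moreau X \<phi> l x + (l *\<^sub>R (x - p)) \<bullet> (z - x) + l / 2 * (norm (z - x))\<^sup>2"
proof -
  obtain us where us: "\<And>n. us n \<in> X" "us \<longlonglongrightarrow> p"
    "(\<lambda>n. \<phi> (us n) + l / 2 * (norm (us n - x))\<^sup>2) \<longlonglongrightarrow> moreau X \<phi> l x"
    using p unfolding prox_limit_def by blast
  have bdd: "bdd_below ((\<lambda>u. \<phi> u + l / 2 * (norm (u - z))\<^sup>2) ` X)"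
    using prox_limit_moreau_lower[OF p \<open>0 < m\<close>] by (rule bdd_belowI2)
  have "\<phi> (us n) + l / 2 * (norm (us n - z))\<^sup>2
      = \<phi> (us n) + l / 2 * (norm (us n - x))\<^sup>2 + l * ((x - us n) \<bullet> (z - x)) + l / 2 * (norm (z - x))\<^sup>2" for n
    unfolding power2_norm_diff_split[of "us n" z x] by (simp add: algebra_simps)
  then have "(\<lambda>n. \<phi> (us n) + l / 2 * (norm (us n - z))\<^sup>2)
      \<longlonglongrightarrow> moreau X \<phi> l x + l * ((x - p) \<bullet> (z - x)) + l / 2 * (norm (z - x))\<^sup>2"
    by (simp only:) (intro tendsto_intros us)
  moreover have "moreau X \<phi> l z \<le> \<phi> (us n) + l / 2 * (norm (us n - z))\<^sup>2" for n
    unfolding moreau_def by (rule cINF_lower[OF bdd us(1)])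
  ultimately show ?thesis by (simp add: LIMSEQ_le_const)
qed

lemma has_derivative_if_quadratic_error:
  fixes f :: "'a::real_inner \<Rightarrow> real"
  assumes "\<And>z. \<bar>f z - f x - G \<bullet> (z - x)\<bar> \<le> K * (norm (z - x))\<^sup>2" and "0 \<le> K"
  shows "(f has_derivative (\<lambda>h. G \<bullet> h)) (at x)"
  unfolding has_derivative_at_alt
proof (intro conjI allI impI)
  show "bounded_linear ((\<bullet>) G)" by (rule bounded_linear_inner_right)
  fix e :: real assume "0 < e"
  show "\<exists>d>0. \<forall>y. norm (y - x) < d \<longrightarrow> norm (f y - f x - G \<bullet> (y - x)) \<le> e * norm (y - x)"
  proof (intro exI[of _ "e / (K + 1)"] conjI allI impI)
    show "0 < e / (K + 1)" using \<open>0 < e\<close> \<open>0 \<le> K\<close> by simp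
    fix y assume y: "norm (y - x) < e / (K + 1)"
    have "K * norm (y - x) \<le> e"
    proof -
      have "K * norm (y - x) \<le> (K + 1) * norm (y - x)" by (simp add: algebra_simps)
      also have "\<dots> \<le> (K + 1) * (e / (K + 1))" using y \<open>0 \<le> K\<close> by (intro mult_left_mono) auto
      finally show ?thesis using \<open>0 \<le> K\<close> by simp
    qed
    then have "K * (norm (y - x))\<^sup>2 \<le> e * norm (y - x)"
      by (simp add: power2_eq_square mult_right_mono flip: mult.assoc)
    with assms(1)[of y] show "norm (f y - f x - G \<bullet> (y - x)) \<le> e * norm (y - x)" by simp
  qed
qed

lemma moreau_has_derivative:
  fixes \<phi> :: "'a::real_inner \<Rightarrow> real"
  assumes p: "prox_limit X \<phi> l m x p" and "0 < m"
  shows "(moreau X \<phi> l has_derivative (\<lambda>h. (l *\<^sub>R (x - p)) \<bullet> h)) (at x)"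
proof (rule has_derivative_if_quadratic_error)
  let ?K = "l\<^sup>2 / (2 * m) + \<bar>l\<bar> / 2"
  show "0 \<le> ?K" using \<open>0 < m\<close> by simp
  fix z
  obtain u where "u \<in> X" using p unfolding prox_limit_def by blast
  then have "moreau X \<phi> l x + (l *\<^sub>R (x - p)) \<bullet> (z - x) - ?K * (norm (z - x))\<^sup>2 \<le> moreau X \<phi> l z"
    unfolding moreau_def[of X \<phi> l z]
    by (intro cINF_greatest prox_limit_moreau_lower[OF p \<open>0 < m\<close>]) auto
  moreover have "l / 2 * (norm (z - x))\<^sup>2 \<le> ?K * (norm (z - x))\<^sup>2"
  proof (rule mult_right_mono)
    have "0 \<le> l\<^sup>2 / (2 * m)" using \<open>0 < m\<close> by simp
    then show "l / 2 \<le> ?K" using abs_ge_self[of l] by linarith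
  qed simp
  ultimately show "\<bar>moreau X \<phi> l z - moreau X \<phi> l x - (l *\<^sub>R (x - p)) \<bullet> (z - x)\<bar> \<le> ?K * (norm (z - x))\<^sup>2"
    using prox_limit_moreau_upper[OF p \<open>0 < m\<close>, of z] by (simp add: abs_le_iff)
qed

lemma prox_limit_dist_bound:
  assumes p: "prox_limit X \<phi>1 l m1 x p" and q: "prox_limit X \<phi>2 l m2 x q"
    and diff: "\<And>a b. a \<in> X \<Longrightarrow> b \<in> X \<Longrightarrow> (\<phi>1 a - \<phi>2 a) - (\<phi>1 b - \<phi>2 b) \<le> L * norm (a - b) + c"
  shows "(m1 + m2) / 2 * (norm (p - q))\<^sup>2 \<le> L * norm (p - q) + c"
proof -
  define F1 F2 where "F1 u = \<phi>1 u + l / 2 * (norm (u - x))\<^sup>2 - moreau X \<phi>1 l x"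
    and "F2 u = \<phi>2 u + l / 2 * (norm (u - x))\<^sup>2 - moreau X \<phi>2 l x" for u
  obtain us where us: "\<And>n. us n \<in> X" "us \<longlonglongrightarrow> p"
    "(\<lambda>n. \<phi>1 (us n) + l / 2 * (norm (us n - x))\<^sup>2) \<longlonglongrightarrow> moreau X \<phi>1 l x"
    using p unfolding prox_limit_def by blast
  obtain vs where vs: "\<And>n. vs n \<in> X" "vs \<longlonglongrightarrow> q"
    "(\<lambda>n. \<phi>2 (vs n) + l / 2 * (norm (vs n - x))\<^sup>2) \<longlonglongrightarrow> moreau X \<phi>2 l x"
    using q unfolding prox_limit_def by blast
  have F1: "(\<lambda>n. F1 (us n)) \<longlonglongrightarrow> 0" and F2: "(\<lambda>n. F2 (vs n)) \<longlonglongrightarrow> 0"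
    unfolding F1_def F2_def by (rule LIM_zero[OF us(3)], rule LIM_zero[OF vs(3)])
  have g1: "m1 / 2 * (norm (u - p))\<^sup>2 \<le> F1 u" and g2: "m2 / 2 * (norm (u - q))\<^sup>2 \<le> F2 u" if "u \<in> X" for u
    using p q that unfolding prox_limit_def F1_def F2_def by auto
  have "m1 / 2 * (norm (vs n - p))\<^sup>2 + m2 / 2 * (norm (us n - q))\<^sup>2
      \<le> L * norm (vs n - us n) + c + F2 (vs n) + F1 (us n)" for n
  proof -
    have "m1 / 2 * (norm (vs n - p))\<^sup>2 \<le> F1 (vs n) " "m2 / 2 * (norm (us n - q))\<^sup>2 \<le> F2 (us n)"
      using g1[OF vs(1)] g2[OF us(1)] .
    moreover have "F1 (vs n) - F2 (vs n) - (F1 (us n) - F2 (us n)) \<le> L * norm (vs n - us n) + c"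
      using diff[OF vs(1)[of n] us(1)[of n]] unfolding F1_def F2_def by (smt (verit))
    ultimately show ?thesis by linarith
  qed
  moreover have "(\<lambda>n. m1 / 2 * (norm (vs n - p))\<^sup>2 + m2 / 2 * (norm (us n - q))\<^sup>2)
      \<longlonglongrightarrow> m1 / 2 * (norm (q - p))\<^sup>2 + m2 / 2 * (norm (p - q))\<^sup>2"
    by (intro tendsto_intros us vs)
  moreover have "(\<lambda>n. L * norm (vs n - us n) + c + F2 (vs n) + F1 (us n)) \<longlonglongrightarrow> L * norm (q - p) + c + 0 + 0"
    by (intro tendsto_intros us vs F1 F2)
  ultimately have "m1 / 2 * (norm (q - p))\<^sup>2 + m2 / 2 * (norm (p - q))\<^sup>2 \<le> L * norm (q - p) + c + 0 + 0"
    by (intro tendsto_le[OF trivial_limit_sequentially]) auto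
  then show ?thesis by (simp add: norm_minus_commute add_divide_distrib distrib_right)
qed

lemma bdd_below_add_quadratic:
  fixes \<phi> :: "'a::real_inner \<Rightarrow> real"
  assumes "a < l" and lower: "\<And>u. u \<in> X \<Longrightarrow> c + g \<bullet> (u - x) - a / 2 * (norm (u - x))\<^sup>2 \<le> \<phi> u"
  shows "bdd_below ((\<lambda>u. \<phi> u + l / 2 * (norm (u - x))\<^sup>2) ` X)"
proof (rule bdd_belowI2)
  fix u assume "u \<in> X"
  define r where "r = norm (u - x)"
  have "0 \<le> ((l - a) * r - norm g)\<^sup>2 / (2 * (l - a))" using \<open>a < l\<close> by simp
  also have "\<dots> = (l - a) / 2 * r\<^sup>2 - norm g * r + (norm g)\<^sup>2 / (2 * (l - a))"
    using \<open>a < l\<close> by (simp add: power2_eq_square field_simps)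
  finally have "c - (norm g)\<^sup>2 / (2 * (l - a)) \<le> c - norm g * r + (l - a) / 2 * r\<^sup>2" by simp
  also have "\<dots> \<le> \<phi> u + l / 2 * r\<^sup>2"
  proof -
    have "- (norm g * r) \<le> g \<bullet> (u - x)"
      using Cauchy_Schwarz_ineq2[of g "u - x"] unfolding r_def by linarith
    moreover have "(l - a) / 2 * r\<^sup>2 = l / 2 * r\<^sup>2 - a / 2 * r\<^sup>2" by (simp add: algebra_simps diff_divide_distrib)
    ultimately show ?thesis using lower[OF \<open>u \<in> X\<close>] unfolding r_def by linarith
  qed
  finally show "c - (norm g)\<^sup>2 / (2 * (l - a)) \<le> \<phi> u + l / 2 * (norm (u - x))\<^sup>2" unfolding r_def .
qed

lemma two_mul_le_of_quadratic_bounds: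
  fixes lb r L \<delta> \<epsilon> :: real
  assumes "0 < lb" "0 \<le> r" "0 \<le> \<epsilon>" and L: "lb * r\<^sup>2 \<le> L * r" and \<delta>: "lb * r\<^sup>2 \<le> 2 * \<delta>"
    and small: "min L (sqrt (lb * \<delta> / 50)) \<le> \<epsilon> / 24"
  shows "2 * lb * r \<le> 5 / 6 * \<epsilon>"
proof (cases "L \<le> \<epsilon> / 24")
  case True
  have "lb * r \<le> L" if "0 < r"
    using L that by (simp add: power2_eq_square flip: mult.assoc)
  then show ?thesis using True \<open>0 \<le> r\<close> \<open>0 \<le> \<epsilon>\<close> by (cases "r = 0") auto
next
  case False
  then have "sqrt (lb * \<delta> / 50) \<le> \<epsilon> / 24" using small by (simp add: min_le_iff_disj)
  moreover have "0 \<le> lb * \<delta> / 50"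
  proof -
    have "0 \<le> lb * r\<^sup>2" using \<open>0 < lb\<close> by simp
    then have "0 \<le> \<delta>" using \<delta> by linarith
    then show ?thesis using \<open>0 < lb\<close> by simp
  qed
  ultimately have "lb * \<delta> / 50 \<le> (\<epsilon> / 24)\<^sup>2" by (metis power_mono real_sqrt_ge_zero real_sqrt_pow2)
  have "(2 * lb * r)\<^sup>2 = 4 * lb * (lb * r\<^sup>2)" by (simp add: power2_eq_square)
  also have "\<dots> \<le> 4 * lb * (2 * \<delta>)" using \<delta> \<open>0 < lb\<close> by (intro mult_left_mono) auto
  also have "\<dots> \<le> (5 / 6 * \<epsilon>)\<^sup>2" using \<open>lb * \<delta> / 50 \<le> (\<epsilon> / 24)\<^sup>2\<close> by (simp add: power2_eq_square mult.commute)
  finally show ?thesis by (rule power2_le_imp_le) (use \<open>0 \<le> \<epsilon>\<close> in simp)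
qed

lemma prox_limit_dist_le:
  assumes p: "prox_limit X \<psi> l m1 x p" and q: "prox_limit X \<psi>h l m2 x q"
    and "2 * lb \<le> m1 + m2" "0 < lb" "0 \<le> \<epsilon>"
    and lip: "\<And>a b. a \<in> X \<Longrightarrow> b \<in> X \<Longrightarrow> (\<psi> a - \<psi>h a) - (\<psi> b - \<psi>h b) \<le> L * norm (a - b)"
    and close: "\<And>a. a \<in> X \<Longrightarrow> \<bar>\<psi> a - \<psi>h a\<bar> \<le> \<delta>"
    and small: "min L (sqrt (lb * \<delta> / 50)) \<le> \<epsilon> / 24"
  shows "2 * lb * norm (p - q) \<le> 5 / 6 * \<epsilon>"
proof -
  define r where "r = norm (p - q)"
  have "lb * r\<^sup>2 \<le> (m1 + m2) / 2 * r\<^sup>2" using \<open>2 * lb \<le> m1 + m2\<close> by (intro mult_right_mono) auto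
  moreover have "(m1 + m2) / 2 * r\<^sup>2 \<le> L * r + 0"
    unfolding r_def by (rule prox_limit_dist_bound[OF p q]) (use lip in simp)
  moreover have "(m1 + m2) / 2 * r\<^sup>2 \<le> 0 * r + 2 * \<delta>"
    unfolding r_def
  proof (rule prox_limit_dist_bound[OF p q])
    fix a b assume "a \<in> X" "b \<in> X"
    with close[of a] close[of b] show "\<psi> a - \<psi>h a - (\<psi> b - \<psi>h b) \<le> 0 * norm (a - b) + 2 * \<delta>"
      by (smt (verit))
  qed
  ultimately show ?thesis
    using two_mul_le_of_quadratic_bounds[OF \<open>0 < lb\<close> _ \<open>0 \<le> \<epsilon>\<close> _ _ small] unfolding r_def by simp
qed

lemma moreau_gradient_transfer:
  fixes \<psi> \<psi>h :: "'a::{real_inner, complete_space} \<Rightarrow> real"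
  assumes X: "convex X" "X \<noteq> {}"
    and wc: "weakly_convex_on X \<psi> c" "weakly_convex_on X \<psi>h lb" and "c \<le> lb" "0 < lb"
    and bdd: "bdd_below ((\<lambda>u. \<psi> u + lb * (norm (u - x))\<^sup>2) ` X)"
      "bdd_below ((\<lambda>u. \<psi>h u + lb * (norm (u - x))\<^sup>2) ` X)"
    and lip: "\<And>a b. a \<in> X \<Longrightarrow> b \<in> X \<Longrightarrow> (\<psi> a - \<psi>h a) - (\<psi> b - \<psi>h b) \<le> L * norm (a - b)"
    and close: "\<And>a. a \<in> X \<Longrightarrow> \<bar>\<psi> a - \<psi>h a\<bar> \<le> \<delta>"
    and small: "min L (sqrt (lb * \<delta> / 50)) \<le> \<epsilon> / 24"
    and Gh: "(moreau X \<psi>h (2 * lb) has_derivative (\<lambda>h. Gh \<bullet> h)) (at x)" "norm Gh \<le> \<epsilon> / 6"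
  shows "\<exists>G. (moreau X \<psi> (2 * lb) has_derivative (\<lambda>h. G \<bullet> h)) (at x) \<and> norm G \<le> \<epsilon>"
proof -
  obtain p where p: "prox_limit X \<psi> (2 * lb) (2 * lb - c) x p"
    using prox_limit_exists[OF X wc(1), of "2 * lb" x] bdd(1) \<open>c \<le> lb\<close> \<open>0 < lb\<close> by auto
  obtain q where q: "prox_limit X \<psi>h (2 * lb) lb x q"
    using prox_limit_exists[OF X wc(2), of "2 * lb" x] bdd(2) \<open>0 < lb\<close> by auto
  have Gh_eq: "Gh = (2 * lb) *\<^sub>R (x - q)"
    using has_derivative_unique[OF Gh(1) moreau_has_derivative[OF q \<open>0 < lb\<close>]]
    by (metis vector_eq_rdot)
  have "0 \<le> \<epsilon>" using Gh(2) norm_ge_zero[of Gh] by linarith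
  have "2 * lb * norm (p - q) \<le> 5 / 6 * \<epsilon>"
    by (rule prox_limit_dist_le[OF p q _ \<open>0 < lb\<close> \<open>0 \<le> \<epsilon>\<close> lip close small])
      (use \<open>c \<le> lb\<close> in simp)
  moreover have "norm ((2 * lb) *\<^sub>R (x - p)) \<le> norm Gh + 2 * lb * norm (p - q)"
  proof -
    have "(2 * lb) *\<^sub>R (x - p) = Gh + (2 * lb) *\<^sub>R (q - p)" unfolding Gh_eq by (simp add: algebra_simps)
    then show ?thesis using \<open>0 < lb\<close> norm_triangle_ineq[of Gh "(2 * lb) *\<^sub>R (q - p)"]
      by (simp add: norm_minus_commute)
  qed
  ultimately show ?thesis
    using moreau_has_derivative[OF p] \<open>c \<le> lb\<close> \<open>0 < lb\<close> Gh(2)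
    by (intro exI[of _ "(2 * lb) *\<^sub>R (x - p)"]) auto
qed

section \<open>Primal functions\<close>

lemma weakly_convex_on_primal:
  assumes X: "convex X" and "Y \<noteq> {}" and g: "\<And>y. y \<in> Y \<Longrightarrow> weakly_convex_on X (\<lambda>x. g x y) c"
    and bdd: "\<And>x. x \<in> X \<Longrightarrow> bdd_above (g x ` Y)"
  shows "weakly_convex_on X (primal Y g) c"
  unfolding weakly_convex_on_def
proof (intro ballI)
  fix u v t assume uvt: "u \<in> X" "v \<in> X" "t \<in> {0..1::real}"
  show "primal Y g (t *\<^sub>R u + (1 - t) *\<^sub>R v)
      \<le> t * primal Y g u + (1 - t) * primal Y g v + c / 2 * t * (1 - t) * (norm (u - v))\<^sup>2"
    unfolding primal_def
  proof (rule cSUP_least[OF \<open>Y \<noteq> {}\<close>])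
    fix y assume y: "y \<in> Y"
    have "g (t *\<^sub>R u + (1 - t) *\<^sub>R v) y \<le> t * g u y + (1 - t) * g v y + c / 2 * t * (1 - t) * (norm (u - v))\<^sup>2"
      using weakly_convex_onD[OF g[OF y] uvt] .
    also have "t * g u y + (1 - t) * g v y \<le> t * (SUP y\<in>Y. g u y) + (1 - t) * (SUP y\<in>Y. g v y)"
      using uvt cSUP_upper[OF y bdd[OF uvt(1)]] cSUP_upper[OF y bdd[OF uvt(2)]]
      by (intro add_mono mult_left_mono) auto
    finally show "g (t *\<^sub>R u + (1 - t) *\<^sub>R v) y
        \<le> t * (SUP y\<in>Y. g u y) + (1 - t) * (SUP y\<in>Y. g v y) + c / 2 * t * (1 - t) * (norm (u - v))\<^sup>2"
      by simp
  qed
qed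

lemma primal_diff_le:
  assumes "Y \<noteq> {}" and bdd: "bdd_above (g1 a ` Y)" "bdd_above (g1 b ` Y)" "bdd_above (g2 a ` Y)"
    and H: "\<And>y y'. y \<in> Y \<Longrightarrow> y' \<in> Y \<Longrightarrow> g1 a y + g2 b y' \<le> g1 b y + g2 a y' + L"
  shows "(primal Y g1 a - primal Y g2 a) - (primal Y g1 b - primal Y g2 b) \<le> L"
proof -
  have "g1 a y \<le> primal Y g1 b + primal Y g2 a + L - g2 b y'" if "y \<in> Y" "y' \<in> Y" for y y'
    using H[OF that] cSUP_upper[OF that(1) bdd(2)] cSUP_upper[OF that(2) bdd(3)]
    unfolding primal_def by linarith
  then have "primal Y g1 a \<le> primal Y g1 b + primal Y g2 a + L - g2 b y'" if "y' \<in> Y" for y'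
    unfolding primal_def[of Y g1 a] using \<open>Y \<noteq> {}\<close> that by (intro cSUP_least) auto
  then have "primal Y g2 b \<le> primal Y g1 b + primal Y g2 a + L - primal Y g1 a"
    unfolding primal_def[of Y g2 b] using \<open>Y \<noteq> {}\<close> by (intro cSUP_least) (auto simp: algebra_simps)
  then show ?thesis by linarith
qed

lemma abs_primal_diff_le:
  assumes "Y \<noteq> {}" and bdd: "bdd_above (g1 x ` Y)" "bdd_above (g2 x ` Y)"
    and H: "\<And>y. y \<in> Y \<Longrightarrow> \<bar>g1 x y - g2 x y\<bar> \<le> \<delta>"
  shows "\<bar>primal Y g1 x - primal Y g2 x\<bar> \<le> \<delta>"
proof -
  have "primal Y g1 x \<le> primal Y g2 x + \<delta>"
    unfolding primal_def[of Y g1]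
  proof (rule cSUP_least[OF \<open>Y \<noteq> {}\<close>])
    fix y assume "y \<in> Y"
    then show "g1 x y \<le> primal Y g2 x + \<delta>"
      using H[of y] cSUP_upper[OF _ bdd(2)] unfolding primal_def by (fastforce simp: abs_le_iff)
  qed
  moreover have "primal Y g2 x \<le> primal Y g1 x + \<delta>"
    unfolding primal_def[of Y g2]
  proof (rule cSUP_least[OF \<open>Y \<noteq> {}\<close>])
    fix y assume "y \<in> Y"
    then show "g2 x y \<le> primal Y g1 x + \<delta>"
      using H[of y] cSUP_upper[OF _ bdd(1)] unfolding primal_def by (fastforce simp: abs_le_iff)
  qed
  ultimately show ?thesis by linarith
qed

section \<open>The Taylor surrogate\<close>

locale taylor_surrogate =
  fixes X :: "'a::euclidean_space set" and Y :: "'b::euclidean_space set"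
    and f :: "'a \<Rightarrow> 'b \<Rightarrow> real" and Gx :: "'a \<Rightarrow> 'b \<Rightarrow> 'a"
    and D :: "nat \<Rightarrow> 'a \<Rightarrow> 'b \<Rightarrow> 'b list \<Rightarrow> real" and Dx :: "'a \<Rightarrow> 'b \<Rightarrow> 'b list \<Rightarrow> 'a"
    and k :: nat and Dm lam \<mu> \<rho> \<sigma> \<tau> :: real and yhat :: 'b
  assumes convX: "convex X" and intX: "interior X \<noteq> {}"
    and convY: "convex Y" and intY: "interior Y \<noteq> {}"
    and diam: "\<And>y y'. y \<in> Y \<Longrightarrow> y' \<in> Y \<Longrightarrow> norm (y - y') \<le> Dm"
    and A1_grad: "x_grad X Y f Gx"
    and A1_lip: "\<And>x x' y y'. x \<in> X \<Longrightarrow> x' \<in> X \<Longrightarrow> y \<in> Y \<Longrightarrow> y' \<in> Y \<Longrightarrow>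
      norm (Gx x' y' - Gx x y) \<le> lam * norm (x' - x) + \<mu> * norm (y' - y)"
    and lam_pos: "0 < lam" and mu_nn: "0 \<le> \<mu>"
    and A2_ex: "y_derivs X Y f k D"
    and A2_lip: "\<And>x x' y y'. x \<in> X \<Longrightarrow> x' \<in> X \<Longrightarrow> y \<in> Y \<Longrightarrow> y' \<in> Y \<Longrightarrow>
      tnorm k (\<lambda>vs. D k x' y' vs - D k x y vs) \<le> \<rho> * norm (y' - y) + \<sigma> * norm (x' - x)"
    and rho_nn: "0 \<le> \<rho>" and sigma_nn: "0 \<le> \<sigma>"
    and A3_ex: "xy_deriv X Y k (D k) Dx"
    and A3_lip: "\<And>x x' y. x \<in> X \<Longrightarrow> x' \<in> X \<Longrightarrow> y \<in> Y \<Longrightarrow>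
      tnorm k (\<lambda>vs. Dx x' y vs - Dx x y vs) \<le> \<tau> * norm (x' - x)"
    and tau_nn: "0 \<le> \<tau>" and yhat: "yhat \<in> Y"
begin

abbreviation "f_hat \<equiv> taylor_approx D k yhat"

abbreviation "lam_bar \<equiv> lam + (if k \<ge> 1 then 2 * \<tau> * Dm ^ k / fact k else 0)"

abbreviation "taylor_error \<equiv> \<rho> * Dm ^ (k + 1) / fact (k + 1)"

text \<open>A Lipschitz constant in x of \<open>f x y - f_hat x y'\<close>; for \<open>k = 0\<close> the surrogate is
  \<open>f x yhat\<close>, and each of the two bounds holds on its own.\<close>

abbreviation "lip_const \<equiv> if k = 0 then min (\<mu> * Dm) (2 * \<sigma>) else \<mu> * Dm + 2 * \<sigma> * Dm ^ k / fact k"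

lemma Dm_nonneg: "0 \<le> Dm"
  using diam[OF yhat yhat] by simp

lemma lam_le_lam_bar: "lam \<le> lam_bar"
  using tau_nn Dm_nonneg by simp

lemma lam_bar_pos: "0 < lam_bar"
  using lam_le_lam_bar lam_pos by (smt (verit))

lemma lam_lt_two_lam_bar: "lam < 2 * lam_bar"
  using lam_le_lam_bar lam_pos by (smt (verit))

lemma norm_power_le_Dm: "y \<in> Y \<Longrightarrow> norm (y - yhat) ^ j \<le> Dm ^ j"
  using diam[OF _ yhat] by (simp add: power_mono)

lemma D0_eq: "x \<in> X \<Longrightarrow> y \<in> Y \<Longrightarrow> D 0 x y [] = f x y"
  using A2_ex unfolding y_derivs_def by blast

lemma D_has_derivative:
  "j < k \<Longrightarrow> x \<in> X \<Longrightarrow> z \<in> Y \<Longrightarrow> length vs = j \<Longrightarrow>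
    ((\<lambda>z'. D j x z' vs) has_derivative (\<lambda>v. D (Suc j) x z (v # vs))) (at z within Y)"
  using A2_ex unfolding y_derivs_def by blast

lemma f_has_derivative:
  "x \<in> X \<Longrightarrow> y \<in> Y \<Longrightarrow> ((\<lambda>x. f x y) has_derivative (\<lambda>h. Gx x y \<bullet> h)) (at x within X)"
  using A1_grad unfolding x_grad_def by blast

lemma Gx_lipschitz:
  "x \<in> X \<Longrightarrow> x' \<in> X \<Longrightarrow> y \<in> Y \<Longrightarrow> norm (Gx x' y - Gx x y) \<le> lam * norm (x' - x)"
  using A1_lip[of x x' y y] by simp

lemma multilinear_D: "x \<in> X \<Longrightarrow> y \<in> Y \<Longrightarrow> j \<le> k \<Longrightarrow> multilinear j (D j x y)"
  using y_derivs_multilinear[OF convY intY A2_ex] by blast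

lemma multilinear_Dx: "x \<in> X \<Longrightarrow> y \<in> Y \<Longrightarrow> multilinear k (Dx x y)"
  using xy_deriv_multilinear[OF convX intX A3_ex] multilinear_D by blast

lemma f_hat_eq_f_if_k0: "k = 0 \<Longrightarrow> x \<in> X \<Longrightarrow> f_hat x y = f x yhat"
  using D0_eq[OF _ yhat] by (simp add: taylor_approx_def)

lemma abs_f_minus_f_hat_le:
  assumes x: "x \<in> X" and y: "y \<in> Y"
  shows "\<bar>f x y - f_hat x y\<bar> \<le> taylor_error"
proof -
  have "\<bar>D 0 x y [] - (\<Sum>j\<le>k. D j x yhat (replicate j (y - yhat)) / fact j)\<bar>
      \<le> 0 / fact k + \<rho> * norm (y - yhat) ^ Suc k / fact (Suc k)"
  proof (rule taylor_remainder_bound_segment[where E = "\<lambda>j. D j x", OF convY yhat y])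
    show "((\<lambda>z'. D j x z' vs) has_derivative (\<lambda>v. D (Suc j) x z (v # vs))) (at z within Y)"
      if "j < k" "z \<in> Y" "length vs = j" for j z vs
      using D_has_derivative[OF that(1) x that(2,3)] .
    fix t :: real assume t: "t \<in> {0..1}"
    define z where "z = yhat + t *\<^sub>R (y - yhat)"
    have z: "z \<in> Y" unfolding z_def by (rule convex_segment_mem[OF convY yhat y t])
    have "\<bar>D k x z (replicate k (y - yhat)) - D k x yhat (replicate k (y - yhat))\<bar>
        \<le> tnorm k (\<lambda>vs. D k x z vs - D k x yhat vs) * norm (y - yhat) ^ k"
      using norm_multilinear_replicate_le[OF multilinear_diff[OF multilinear_D[OF x z order_refl]
          multilinear_D[OF x yhat order_refl]]] by simp
    also have "\<dots> \<le> (\<rho> * norm (z - yhat) + \<sigma> * norm (x - x)) * norm (y - yhat) ^ k"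
      using A2_lip[OF x x yhat z] by (intro mult_right_mono) auto
    also have "\<dots> = 0 + \<rho> * norm (y - yhat) ^ Suc k * t"
      using t by (simp add: z_def mult_ac)
    finally show "\<bar>D k x (yhat + t *\<^sub>R (y - yhat)) (replicate k (y - yhat)) - D k x yhat (replicate k (y - yhat))\<bar>
        \<le> 0 + \<rho> * norm (y - yhat) ^ Suc k * t"
      by (simp add: z_def)
  qed
  also have "\<dots> \<le> taylor_error"
    using norm_power_le_Dm[OF y, of "Suc k"] rho_nn by (simp add: divide_right_mono mult_left_mono)
  finally show ?thesis using D0_eq[OF x y] by (simp add: taylor_approx_def)
qed

lemma f_minus_f_hat_lipschitz:
  assumes a: "a \<in> X" and b: "b \<in> X" and y: "y \<in> Y"
  shows "\<bar>(f a y - f_hat a y) - (f b y - f_hat b y)\<bar> \<le> 2 * \<sigma> * Dm ^ k / fact k * norm (a - b)"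
proof -
  have "\<bar>(D 0 a y [] - D 0 b y []) -
      (\<Sum>j\<le>k. (D j a yhat (replicate j (y - yhat)) - D j b yhat (replicate j (y - yhat))) / fact j)\<bar>
      \<le> 2 * (\<sigma> * norm (a - b) * Dm ^ k) / fact k"
  proof (rule taylor_remainder_bound_uniform[where E = "\<lambda>j z vs. D j a z vs - D j b z vs", OF convY yhat y])
    show "((\<lambda>z'. D j a z' vs - D j b z' vs) has_derivative
        (\<lambda>v. D (Suc j) a z (v # vs) - D (Suc j) b z (v # vs))) (at z within Y)"
      if "j < k" "z \<in> Y" "length vs = j" for j z vs
      using D_has_derivative[OF that(1) a that(2,3)] D_has_derivative[OF that(1) b that(2,3)]
      by (rule has_derivative_diff)
    fix z assume z: "z \<in> Y"
    have "\<bar>D k a z (replicate k (y - yhat)) - D k b z (replicate k (y - yhat))\<bar>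
        \<le> tnorm k (\<lambda>vs. D k a z vs - D k b z vs) * norm (y - yhat) ^ k"
      using norm_multilinear_replicate_le[OF multilinear_diff[OF multilinear_D[OF a z order_refl]
          multilinear_D[OF b z order_refl]]] by simp
    also have "\<dots> \<le> (\<sigma> * norm (a - b)) * Dm ^ k"
      using A2_lip[OF b a z z] norm_power_le_Dm[OF y, of k] sigma_nn by (intro mult_mono) auto
    finally show "\<bar>D k a z (replicate k (y - yhat)) - D k b z (replicate k (y - yhat))\<bar>
        \<le> \<sigma> * norm (a - b) * Dm ^ k" .
  qed
  moreover have "(f a y - f_hat a y) - (f b y - f_hat b y) = (D 0 a y [] - D 0 b y []) -
      (\<Sum>j\<le>k. (D j a yhat (replicate j (y - yhat)) - D j b yhat (replicate j (y - yhat))) / fact j)"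
    using D0_eq[OF a y] D0_eq[OF b y] by (simp add: taylor_approx_def sum_subtractf diff_divide_distrib)
  ultimately show ?thesis by (simp add: mult_ac)
qed

lemma D_convex_combination_bound:
  assumes u: "u \<in> X" and v: "v \<in> X" and z: "z \<in> Y" and t: "t \<in> {0..1}"
  shows "\<bar>t * D k u z (replicate k s) + (1 - t) * D k v z (replicate k s)
      - D k (t *\<^sub>R u + (1 - t) *\<^sub>R v) z (replicate k s)\<bar>
    \<le> \<tau> * norm s ^ k / 2 * t * (1 - t) * (norm (u - v))\<^sup>2"
proof (rule lipschitz_gradient_convex_combination_bound[where h = "\<lambda>x'. D k x' z (replicate k s)"
      and G = "\<lambda>x'. Dx x' z (replicate k s)", OF convX _ _ u v t])
  show "((\<lambda>x'. D k x' z (replicate k s)) has_derivative (\<lambda>d. Dx x z (replicate k s) \<bullet> d)) (at x within X)"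
    if "x \<in> X" for x
    using A3_ex that z unfolding xy_deriv_def by simp
  show "norm (Dx x' z (replicate k s) - Dx x z (replicate k s)) \<le> \<tau> * norm s ^ k * norm (x' - x)"
    if "x \<in> X" "x' \<in> X" for x x'
  proof -
    have "norm (Dx x' z (replicate k s) - Dx x z (replicate k s))
        \<le> tnorm k (\<lambda>vs. Dx x' z vs - Dx x z vs) * norm s ^ k"
      using norm_multilinear_replicate_le[OF multilinear_diff[OF multilinear_Dx[OF that(2) z]
          multilinear_Dx[OF that(1) z]]] by simp
    also have "\<dots> \<le> \<tau> * norm (x' - x) * norm s ^ k"
      using A3_lip[OF that z] by (intro mult_right_mono) auto
    finally show ?thesis by (simp add: mult_ac)
  qed
qed

lemma f_minus_f_hat_convex_combination:
  assumes u: "u \<in> X" and v: "v \<in> X" and y: "y \<in> Y" and t: "t \<in> {0..1}"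
  shows "\<bar>t * (f u y - f_hat u y) + (1 - t) * (f v y - f_hat v y)
      - (f (t *\<^sub>R u + (1 - t) *\<^sub>R v) y - f_hat (t *\<^sub>R u + (1 - t) *\<^sub>R v) y)\<bar>
    \<le> \<tau> * Dm ^ k / fact k * t * (1 - t) * (norm (u - v))\<^sup>2"
proof -
  define w where "w = t *\<^sub>R u + (1 - t) *\<^sub>R v"
  have w: "w \<in> X" unfolding w_def by (rule convex_combination_mem[OF convX u v t])
  define N where "N = t * (1 - t) * (norm (u - v))\<^sup>2"
  have "0 \<le> N" using t by (simp add: N_def)
  let ?E = "\<lambda>j z vs. t * D j u z vs + (1 - t) * D j v z vs - D j w z vs"
  have "\<bar>?E 0 y [] - (\<Sum>j\<le>k. ?E j yhat (replicate j (y - yhat)) / fact j)\<bar> \<le> 2 * (\<tau> * Dm ^ k / 2 * N) / fact k"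
  proof (rule taylor_remainder_bound_uniform[where E = ?E, OF convY yhat y])
    show "((\<lambda>z'. ?E j z' vs) has_derivative (\<lambda>d. ?E (Suc j) z (d # vs))) (at z within Y)"
      if "j < k" "z \<in> Y" "length vs = j" for j z vs
      using D_has_derivative[OF that(1) u that(2,3)] D_has_derivative[OF that(1) v that(2,3)]
        D_has_derivative[OF that(1) w that(2,3)]
      by (intro has_derivative_diff has_derivative_add has_derivative_mult_right)
    fix z assume z: "z \<in> Y"
    have "\<bar>?E k z (replicate k (y - yhat))\<bar> \<le> \<tau> * norm (y - yhat) ^ k / 2 * N"
      using D_convex_combination_bound[OF u v z t, of "y - yhat"] by (simp add: w_def N_def mult_ac)
    also have "\<dots> \<le> \<tau> * Dm ^ k / 2 * N"
      using norm_power_le_Dm[OF y, of k] tau_nn \<open>0 \<le> N\<close> by (intro mult_right_mono divide_right_mono mult_left_mono) auto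
    finally show "\<bar>?E k z (replicate k (y - yhat))\<bar> \<le> \<tau> * Dm ^ k / 2 * N" .
  qed
  moreover have "t * (f u y - f_hat u y) + (1 - t) * (f v y - f_hat v y) - (f w y - f_hat w y)
      = ?E 0 y [] - (\<Sum>j\<le>k. ?E j yhat (replicate j (y - yhat)) / fact j)"
    using D0_eq[OF u y] D0_eq[OF v y] D0_eq[OF w y]
    by (simp add: taylor_approx_def sum_subtractf sum.distrib sum_distrib_left diff_divide_distrib
        add_divide_distrib algebra_simps)
  ultimately show ?thesis by (simp add: w_def N_def mult_ac)
qed

lemma f_diff_y_le:
  assumes a: "a \<in> X" and b: "b \<in> X" and y: "y \<in> Y" and y': "y' \<in> Y"
  shows "\<bar>(f a y - f b y) - (f a y' - f b y')\<bar> \<le> \<mu> * Dm * norm (a - b)"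
proof -
  have "((\<lambda>x. f x y - f x y') has_derivative (\<lambda>h. Gx x y \<bullet> h - Gx x y' \<bullet> h)) (at x within X)"
    if "x \<in> X" for x
    using A1_grad that y y' unfolding x_grad_def by (intro has_derivative_diff) auto
  moreover have "onorm (\<lambda>h. Gx x y \<bullet> h - Gx x y' \<bullet> h) \<le> \<mu> * Dm" if "x \<in> X" for x
  proof (rule onorm_le)
    fix h :: 'a
    have "norm (Gx x y \<bullet> h - Gx x y' \<bullet> h) \<le> norm (Gx x y - Gx x y') * norm h"
      using Cauchy_Schwarz_ineq2[of "Gx x y - Gx x y'" h] by (simp add: inner_diff_left)
    also have "norm (Gx x y - Gx x y') \<le> \<mu> * Dm"
      using A1_lip[OF that that y' y] diam[OF y y'] mu_nn by (simp add: mult_left_mono order_trans)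
    finally show "norm (Gx x y \<bullet> h - Gx x y' \<bullet> h) \<le> \<mu> * Dm * norm h" by (simp add: mult_right_mono)
  qed
  ultimately have "norm ((f a y - f a y') - (f b y - f b y')) \<le> \<mu> * Dm * norm (a - b)"
    by (rule differentiable_bound[OF convX _ _ a b])
  then show ?thesis by (simp add: algebra_simps)
qed

lemma f_cross_diff_le:
  assumes a: "a \<in> X" and b: "b \<in> X" and y: "y \<in> Y" and y': "y' \<in> Y"
  shows "(f a y - f_hat a y') - (f b y - f_hat b y') \<le> lip_const * norm (a - b)"
proof (cases "k = 0")
  case True
  have "(f a y - f_hat a y') - (f b y - f_hat b y') = (f a y - f b y) - (f a yhat - f b yhat)"
    using f_hat_eq_f_if_k0[OF True a] f_hat_eq_f_if_k0[OF True b] by simp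
  moreover have "\<bar>(f a y - f b y) - (f a yhat - f b yhat)\<bar> \<le> \<mu> * Dm * norm (a - b)"
    by (rule f_diff_y_le[OF a b y yhat])
  moreover have "\<bar>(f a y - f a yhat) - (f b y - f b yhat)\<bar> \<le> 2 * \<sigma> * norm (a - b)"
    using f_minus_f_hat_lipschitz[OF a b y] f_hat_eq_f_if_k0[OF True a] f_hat_eq_f_if_k0[OF True b] True
    by simp
  ultimately show ?thesis using True by (auto simp: min_mult_distrib_right abs_le_iff min_le_iff_disj)
next
  case False
  have "\<bar>(f a y - f b y) - (f a y' - f b y')\<bar> \<le> \<mu> * Dm * norm (a - b)"
    by (rule f_diff_y_le[OF a b y y'])
  moreover have "\<bar>(f a y' - f_hat a y') - (f b y' - f_hat b y')\<bar> \<le> 2 * \<sigma> * Dm ^ k / fact k * norm (a - b)"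
    by (rule f_minus_f_hat_lipschitz[OF a b y'])
  ultimately show ?thesis using False by (simp add: distrib_right abs_le_iff)
qed

lemma weakly_convex_f: "y \<in> Y \<Longrightarrow> weakly_convex_on X (\<lambda>x. f x y) lam"
  using weakly_convex_on_lipschitz_gradient[OF convX f_has_derivative Gx_lipschitz] by blast

lemma weakly_convex_f_hat:
  assumes y: "y \<in> Y"
  shows "weakly_convex_on X (\<lambda>x. f_hat x y) lam_bar"
proof (cases "k = 0")
  case True
  have "weakly_convex_on X (\<lambda>x. f_hat x y) (lam + 2 * 0)"
  proof (rule weakly_convex_on_perturb[OF weakly_convex_f[OF yhat]])
    fix u v t assume "u \<in> X" "v \<in> X" "t \<in> {0..1::real}"
    moreover from this have "t *\<^sub>R u + (1 - t) *\<^sub>R v \<in> X" by (rule convex_combination_mem[OF convX])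
    ultimately show "\<bar>t * (f u yhat - f_hat u y) + (1 - t) * (f v yhat - f_hat v y)
        - (f (t *\<^sub>R u + (1 - t) *\<^sub>R v) yhat - f_hat (t *\<^sub>R u + (1 - t) *\<^sub>R v) y)\<bar>
      \<le> 0 * t * (1 - t) * (norm (u - v))\<^sup>2"
      using f_hat_eq_f_if_k0[OF True] by simp
  qed
  then show ?thesis using True by simp
next
  case False
  have "weakly_convex_on X (\<lambda>x. f_hat x y) (lam + 2 * (\<tau> * Dm ^ k / fact k))"
    by (rule weakly_convex_on_perturb[OF weakly_convex_f[OF y] f_minus_f_hat_convex_combination[OF _ _ y]])
  then show ?thesis using False by (simp add: mult.assoc)
qed

lemma bdd_above_f_hat: "x \<in> X \<Longrightarrow> bdd_above (f_hat x ` Y)"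
proof (rule bdd_aboveI2)
  fix y assume x: "x \<in> X" and y: "y \<in> Y"
  have "f_hat x y \<le> (\<Sum>j\<le>k. \<bar>D j x yhat (replicate j (y - yhat))\<bar> / fact j)"
    unfolding taylor_approx_def by (intro sum_mono) (simp add: divide_right_mono)
  also have "\<dots> \<le> (\<Sum>j\<le>k. \<bar>tnorm j (D j x yhat)\<bar> * Dm ^ j / fact j)"
  proof (intro sum_mono divide_right_mono)
    fix j assume "j \<in> {..k}"
    then have "\<bar>D j x yhat (replicate j (y - yhat))\<bar> \<le> tnorm j (D j x yhat) * norm (y - yhat) ^ j"
      using norm_multilinear_replicate_le[OF multilinear_D[OF x yhat]] by simp
    also have "\<dots> \<le> \<bar>tnorm j (D j x yhat)\<bar> * Dm ^ j"
      using norm_power_le_Dm[OF y, of j] by (intro mult_mono) auto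
    finally show "\<bar>D j x yhat (replicate j (y - yhat))\<bar> \<le> \<bar>tnorm j (D j x yhat)\<bar> * Dm ^ j" .
  qed simp
  finally show "f_hat x y \<le> (\<Sum>j\<le>k. \<bar>tnorm j (D j x yhat)\<bar> * Dm ^ j / fact j)" .
qed

lemma bdd_above_f:
  assumes x: "x \<in> X"
  shows "bdd_above (f x ` Y)"
proof -
  obtain M where M: "\<And>y. y \<in> Y \<Longrightarrow> f_hat x y \<le> M"
    using bdd_above_f_hat[OF x] by (auto simp: bdd_above_def)
  have "f x y \<le> M + taylor_error" if "y \<in> Y" for y
    using abs_le_D1[OF abs_f_minus_f_hat_le[OF x that]] M[OF that] by linarith
  then show ?thesis by (rule bdd_aboveI2)
qed

lemma weakly_convex_primal_f: "weakly_convex_on X (primal Y f) lam"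
  using weakly_convex_on_primal[OF convX _ weakly_convex_f bdd_above_f] yhat by blast

lemma weakly_convex_primal_f_hat: "weakly_convex_on X (primal Y f_hat) lam_bar"
  using weakly_convex_on_primal[OF convX _ weakly_convex_f_hat bdd_above_f_hat] yhat by blast

lemma abs_primal_f_minus_f_hat_le: "a \<in> X \<Longrightarrow> \<bar>primal Y f a - primal Y f_hat a\<bar> \<le> taylor_error"
  using yhat bdd_above_f bdd_above_f_hat abs_f_minus_f_hat_le by (intro abs_primal_diff_le) auto

lemma primal_f_minus_f_hat_lipschitz:
  "a \<in> X \<Longrightarrow> b \<in> X \<Longrightarrow>
    (primal Y f a - primal Y f_hat a) - (primal Y f b - primal Y f_hat b) \<le> lip_const * norm (a - b)"
proof (intro primal_diff_le)
  fix y y' assume "a \<in> X" "b \<in> X" "y \<in> Y" "y' \<in> Y"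
  from f_cross_diff_le[OF this]
  show "f a y + f_hat b y' \<le> f b y + f_hat a y' + lip_const * norm (a - b)" by linarith
qed (use yhat bdd_above_f bdd_above_f_hat in auto)

lemma bdd_below_primal_add_quadratic:
  assumes x: "x \<in> X"
  shows "bdd_below ((\<lambda>u. primal Y f u + lam_bar * (norm (u - x))\<^sup>2) ` X)"
    and "bdd_below ((\<lambda>u. primal Y f_hat u + lam_bar * (norm (u - x))\<^sup>2) ` X)"
proof -
  have lower: "f x yhat + Gx x yhat \<bullet> (u - x) - lam / 2 * (norm (u - x))\<^sup>2 \<le> primal Y f u"
    if u: "u \<in> X" for u
  proof -
    have "\<bar>f u yhat - f x yhat - Gx x yhat \<bullet> (u - x)\<bar> \<le> lam / 2 * (norm (u - x))\<^sup>2"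
      using lipschitz_gradient_linearization_bound[OF convX f_has_derivative Gx_lipschitz u x] yhat by blast
    moreover have "f u yhat \<le> primal Y f u"
      unfolding primal_def by (rule cSUP_upper[OF yhat bdd_above_f[OF u]])
    ultimately show ?thesis by linarith
  qed
  have lower_hat: "f x yhat - taylor_error + Gx x yhat \<bullet> (u - x) - lam / 2 * (norm (u - x))\<^sup>2
      \<le> primal Y f_hat u" if u: "u \<in> X" for u
    using lower[OF u] abs_le_D1[OF abs_primal_f_minus_f_hat_le[OF u]] by linarith
  have two: "2 * lam_bar / 2 = lam_bar" by simp
  show "bdd_below ((\<lambda>u. primal Y f u + lam_bar * (norm (u - x))\<^sup>2) ` X)"
    using bdd_below_add_quadratic[OF lam_lt_two_lam_bar lower] unfolding two .
  show "bdd_below ((\<lambda>u. primal Y f_hat u + lam_bar * (norm (u - x))\<^sup>2) ` X)"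
    using bdd_below_add_quadratic[OF lam_lt_two_lam_bar lower_hat] unfolding two .
qed

theorem surrogate_fosp_imp_fosp:
  assumes fosp: "is_fosp X Y f_hat (\<epsilon> / 6) (2 * lam_bar) x"
    and small: "min lip_const (sqrt (lam_bar * taylor_error / 50)) \<le> \<epsilon> / 24"
  shows "is_fosp X Y f \<epsilon> (2 * lam_bar) x"
proof -
  obtain Gh where x: "x \<in> X" and Gh: "(moreau X (primal Y f_hat) (2 * lam_bar) has_derivative (\<lambda>h. Gh \<bullet> h)) (at x)"
    "norm Gh \<le> \<epsilon> / 6"
    using fosp unfolding is_fosp_def by blast
  have "\<exists>G. (moreau X (primal Y f) (2 * lam_bar) has_derivative (\<lambda>h. G \<bullet> h)) (at x) \<and> norm G \<le> \<epsilon>"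
    by (rule moreau_gradient_transfer[OF convX _ weakly_convex_primal_f weakly_convex_primal_f_hat
          lam_le_lam_bar _ bdd_below_primal_add_quadratic[OF x] primal_f_minus_f_hat_lipschitz
          abs_primal_f_minus_f_hat_le small Gh])
      (use x lam_bar_pos in auto)
  then show ?thesis using x unfolding is_fosp_def by blast
qed

end

theorem theorem1:

  fixes X :: "'a::euclidean_space set" and Y :: "'b::euclidean_space set"
    and f :: "'a \<Rightarrow> 'b \<Rightarrow> real"
    and k :: nat and Dm lam \<mu> \<rho> \<sigma> \<tau> eps :: real
    and Gx :: "'a \<Rightarrow> 'b \<Rightarrow> 'a"
    and D :: "nat \<Rightarrow> 'a \<Rightarrow> 'b \<Rightarrow> 'b list \<Rightarrow> real"
    and Dx :: "'a \<Rightarrow> 'b \<Rightarrow> 'b list \<Rightarrow> 'a"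
    and yhat :: 'b and xs :: 'a
  assumes convX: "convex X" and intX: "interior X \<noteq> {}"
    and convY: "convex Y" and intY: "interior Y \<noteq> {}" and compY: "compact Y"
    and diam: "\<forall>y\<in>Y. \<forall>y'\<in>Y. norm (y - y') \<le> Dm"
    (* (A1) *)
    and A1_grad: "x_grad X Y f Gx"
    and A1_lip: "\<forall>x\<in>X. \<forall>x'\<in>X. \<forall>y\<in>Y. \<forall>y'\<in>Y.
          norm (Gx x' y' - Gx x y) \<le> lam * norm (x' - x) + \<mu> * norm (y' - y)"
    and lam_pos: "lam > 0" and mu_nn: "\<mu> \<ge> 0"
    (* (A2) *)
    and A2_ex: "y_derivs X Y f k D"
    and A2_lip: "\<forall>x\<in>X. \<forall>x'\<in>X. \<forall>y\<in>Y. \<forall>y'\<in>Y.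
          tnorm k (\<lambda>vs. D k x' y' vs - D k x y vs) \<le> \<rho> * norm (y' - y) + \<sigma> * norm (x' - x)"
    and rho_nn: "\<rho> \<ge> 0" and sigma_nn: "\<sigma> \<ge> 0"
    (* (A3) *)
    and A3_ex: "xy_deriv X Y k (D k) Dx"
    and A3_lip: "\<forall>x\<in>X. \<forall>x'\<in>X. \<forall>y\<in>Y.
          tnorm k (\<lambda>vs. Dx x' y vs - Dx x y vs) \<le> \<tau> * norm (x' - x)"
    and tau_nn: "\<tau> \<ge> 0"
    (* (A4) *)
    and A4: "{(x, y). x \<in> X \<and> y \<in> Y \<and> \<not> xxy_exists X k Dx x y} \<in> sets lebesgue"
    (* expansion center and surrogate FOSP *)
    and yhat: "yhat \<in> Y"
    and fosp: "is_fosp X Y (taylor_approx D k yhat) (eps / 6)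
                 (2 * (lam + (if k \<ge> 1 then 2 * \<tau> * Dm ^ k / fact k else 0))) xs"
    and cond0: "k = 0 \<Longrightarrow> min (\<mu> * Dm) (min (2 * \<sigma>) (sqrt (lam * \<rho> * Dm / 50))) \<le> eps / 24"
    and cond1: "k \<ge> 1 \<Longrightarrow>
          min (\<mu> * Dm + 2 * \<sigma> * Dm ^ k / fact k)
              (sqrt ((lam + 2 * \<tau> * Dm ^ k / fact k) * \<rho> * Dm ^ (k + 1) / (50 * fact (k + 1))))
            \<le> eps / 24"
  shows "is_fosp X Y f eps (2 * (lam + (if k \<ge> 1 then 2 * \<tau> * Dm ^ k / fact k else 0))) xs"
proof -
  interpret taylor_surrogate X Y f Gx D Dx k Dm lam \<mu> \<rho> \<sigma> \<tau> yhat
    by unfold_locales (use convX intX convY intY diam A1_grad A1_lip lam_pos mu_nn A2_ex A2_lip rho_nn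
        sigma_nn A3_ex A3_lip tau_nn yhat in auto)
  have "min lip_const (sqrt (lam_bar * taylor_error / 50)) \<le> eps / 24"
  proof (cases "k = 0")
    case True
    then show ?thesis using cond0 by (simp add: min.assoc mult.assoc)
  next
    case False
    then have "1 \<le> k" by simp
    have "lam_bar * taylor_error / 50
        = (lam + 2 * \<tau> * Dm ^ k / fact k) * \<rho> * Dm ^ (k + 1) / (50 * fact (k + 1))"
      using \<open>1 \<le> k\<close> by (simp add: ac_simps)
    then show ?thesis using cond1[OF \<open>1 \<le> k\<close>] False by simp
  qed
  then show ?thesis using surrogate_fosp_imp_fosp[OF fosp] by simp
qed

end
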